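(* Let $\tilde\eta=(\tilde\eta_1,\ldots,\tilde\eta_\kappa)$ be any linear-plus-noise signaling rule with signals $\tilde{\mathbf{s}}_k=\tilde\eta_k(\mathbf{y}_{1:k})=\tilde L_k'\mathbf{y}_{1:k}+\tilde{\boldsymbol{\vartheta}}_k\in\mathbb{R}^{nk}$ ($\tilde L_k\in\mathbb{R}^{nk\times nk}$, $\tilde{\boldsymbol{\vartheta}}_k$ zero-mean Gaussian independent of everything else). Define the signaling rule $\eta$ with $m$-dimensional signals by $\eta_k(\mathbf{y}_{1:k}):=\mathbb{E}\{\mathbf{x}^o_k\mid\tilde\eta_1(\mathbf{y}_1),\ldots,\tilde\eta_k(\mathbf{y}_{1:k})\}$, $k\ge1$. Then $\eta$ and $\tilde\eta$ induce, for every type $\omega\in\Omega^o$, the same best-response control inputs almost surely, and hence the same cost $U_S$ for the sensor.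
   Context: Setting with imperfect measurements: state $\mathbf{x}_{k+1}=A\mathbf{x}_k+B\mathbf{u}_k+\mathbf{w}_k$, measurements $\mathbf{y}_k=C\mathbf{x}_k+\mathbf{v}_k\in\mathbb{R}^n$, $k=1,\ldots,\kappa$, with $A\in\mathbb{R}^{m\times m}$, $B\in\mathbb{R}^{m\times r}$, $C\in\mathbb{R}^{n\times m}$, $\mathbf{x}_1\sim\mathcal{N}(0,\Sigma_1)$, $\mathbf{w}_k\sim\mathcal{N}(0,\Sigma_w)$, $\mathbf{v}_k\sim\mathcal{N}(0,\Sigma_v)$, all mutually independent and white. $\mathbf{y}_{1:k}=[\mathbf{y}_k'\cdots\mathbf{y}_1']'$. A signaling rule maps $\mathbf{y}_{1:k}$ to a signal $\mathbf{s}_k$; the follower's control is $\mathbf{u}_k=\gamma_k(\mathbf{s}_{1:k})$ with $\gamma_k$ Borel measurable. Finite type set $\Omega$, $\Omega^o=\Omega\cup\{\omega_o\}$, weights $Q^{\omega}\in\mathbb{S}^m_+$, $R^{\omega}\in\mathbb{S}^r_{++}$. Type-$\omega$ cost $U_C^{\omega}(\eta,\gamma)=\sum_{k=1}^{\kappa}\mathbb{E}\|\mathbf{x}^{\omega}_{k+1}\|^2_{Q^{\omega}}+\mathbb{E}\|\mathbf{u}^{\omega}_k\|^2_{R^{\omega}}$ ($\|z\|_M^2=z'Mz$); type $\omega$ plays a best response minimizing it. Sensor cost $U_S=\max_{p\in\Delta(\Omega^o)}\{\sum_{\omega\in\Omega}p_{\omega}\sum_k\mathbb{E}\|\mathbf{x}^{\omega}_{k+1}\|^2_{Q^{\omega_o}}+p_{\omega_o}\sum_k(\mathbb{E}\|\mathbf{x}^{\omega_o}_{k+1}\|^2_{Q^{\omega_o}}+\mathbb{E}\|\mathbf{u}^{\omega_o}_k\|^2_{R^{\omega_o}})\}$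 evaluated under the best responses, $\Delta(\Omega^o)$ the probability simplex. Control-free state $\mathbf{x}^o_{k+1}=A\mathbf{x}^o_k+\mathbf{w}_k$, $\mathbf{x}^o_1=\mathbf{x}_1$. *)

theory Defs
  imports "HOL-Probability.Probability"
begin

definition psd_mat :: "real^'m^'m \<Rightarrow> bool" where
  "psd_mat Q \<longleftrightarrow> transpose Q = Q \<and> (\<forall>z. 0 \<le> z \<bullet> (Q *v z))"

definition pd_mat :: "real^'m^'m \<Rightarrow> bool" where
  "pd_mat Q \<longleftrightarrow> transpose Q = Q \<and> (\<forall>z. z \<noteq> 0 \<longrightarrow> 0 < z \<bullet> (Q *v z))"

definition qf :: "real^'m^'m \<Rightarrow> real^'m \<Rightarrow> real" where
  "qf Q z = z \<bullet> (Q *v z)"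

definition centered_normal_rv :: "'a measure \<Rightarrow> ('a \<Rightarrow> real) \<Rightarrow> bool" where
  "centered_normal_rv M X \<longleftrightarrow> X \<in> borel_measurable M \<and>
     (distr M borel X = return borel 0 \<or>
      (\<exists>\<sigma>>0. distr M borel X = density lborel (normal_density 0 \<sigma>)))"

definition centered_gaussian_vec :: "'a measure \<Rightarrow> ('a \<Rightarrow> real^'d) \<Rightarrow> bool" where
  "centered_gaussian_vec M X \<longleftrightarrow> (\<forall>c. centered_normal_rv M (\<lambda>\<omega>. c \<bullet> X \<omega>))"

text \<open>Covariance matrix of a zero-mean random vector.\<close>
definition has_cov :: "'a measure \<Rightarrow> ('a \<Rightarrow> real^'d) \<Rightarrow> real^'d^'d \<Rightarrow> bool" where
  "has_cov M X S \<longleftrightarrow> (\<forall>i j. integral\<^sup>L M (\<lambda>\<omega>. X \<omega> $ i * X \<omega> $ j) = S $ i $ j)"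

text \<open>Block vectors in R^{nk}: blocks indexed by 1..k, everything else masked to 0.\<close>
definition mask_blocks :: "nat \<Rightarrow> (nat \<Rightarrow> real^'n) \<Rightarrow> nat \<Rightarrow> real^'n" where
  "mask_blocks k z = (\<lambda>i. if 1 \<le> i \<and> i \<le> k then z i else 0)"

definition centered_gaussian_block :: "'a measure \<Rightarrow> nat \<Rightarrow> ('a \<Rightarrow> nat \<Rightarrow> real^'n) \<Rightarrow> bool" where
  "centered_gaussian_block M k T \<longleftrightarrow>
     (\<forall>c::nat \<Rightarrow> real^'n. centered_normal_rv M (\<lambda>\<omega>. \<Sum>i\<in>{1..k}. c i \<bullet> T \<omega> i))"

datatype prim = PX1 | PW nat | PV nat | PT nat

definition prim_sets ::
  "'a measure \<Rightarrow> ('a \<Rightarrow> real^'m) \<Rightarrow> (nat \<Rightarrow> 'a \<Rightarrow> real^'m) \<Rightarrow> (nat \<Rightarrow> 'a \<Rightarrow> real^'n)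
   \<Rightarrow> (nat \<Rightarrow> 'a \<Rightarrow> nat \<Rightarrow> real^'n) \<Rightarrow> prim \<Rightarrow> 'a set set" where
  "prim_sets M x1 w v \<theta> p = (case p of
      PX1 \<Rightarrow> {x1 -` B \<inter> space M | B. B \<in> sets borel}
    | PW k \<Rightarrow> {w k -` B \<inter> space M | B. B \<in> sets borel}
    | PV k \<Rightarrow> {v k -` B \<inter> space M | B. B \<in> sets borel}
    | PT k \<Rightarrow> {(\<lambda>\<omega>. mask_blocks k (\<theta> k \<omega>)) -` B \<inter> space M | B. B \<in> sets (PiM UNIV (\<lambda>_. borel))})"

definition ymeas :: "real^'m^'n \<Rightarrow> (nat \<Rightarrow> 'a \<Rightarrow> real^'n) \<Rightarrow> (nat \<Rightarrow> real^'m) \<Rightarrow> 'a \<Rightarrow> nat \<Rightarrow> nat \<Rightarrow> real^'n" where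
  "ymeas C v xh \<omega> k = (\<lambda>i. if 1 \<le> i \<and> i \<le> k then C *v xh i + v i \<omega> else 0)"

text \<open>A (possibly randomized) signaling rule sig: sig k y_{1:k} \<omega> is the signal s_k.
  Signal history s_{1:k} (entries outside 1..k carry no information).\<close>
definition shist :: "(nat \<Rightarrow> (nat \<Rightarrow> real^'n) \<Rightarrow> 'a \<Rightarrow> 's) \<Rightarrow> real^'m^'n \<Rightarrow> (nat \<Rightarrow> 'a \<Rightarrow> real^'n)
    \<Rightarrow> (nat \<Rightarrow> real^'m) \<Rightarrow> 'a \<Rightarrow> nat \<Rightarrow> nat \<Rightarrow> 's" where
  "shist sig C v xh \<omega> k = (\<lambda>j. if 1 \<le> j \<and> j \<le> k then sig j (ymeas C v xh \<omega> j) \<omega> else undefined)"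

definition ctrl :: "(nat \<Rightarrow> (nat \<Rightarrow> 's) \<Rightarrow> real^'r) \<Rightarrow> (nat \<Rightarrow> (nat \<Rightarrow> real^'n) \<Rightarrow> 'a \<Rightarrow> 's)
    \<Rightarrow> real^'m^'n \<Rightarrow> (nat \<Rightarrow> 'a \<Rightarrow> real^'n) \<Rightarrow> (nat \<Rightarrow> real^'m) \<Rightarrow> 'a \<Rightarrow> nat \<Rightarrow> real^'r" where
  "ctrl \<gamma> sig C v xh \<omega> k = \<gamma> k (shist sig C v xh \<omega> k)"

fun xhist :: "real^'m^'m \<Rightarrow> real^'r^'m \<Rightarrow> real^'m^'n \<Rightarrow> ('a \<Rightarrow> real^'m) \<Rightarrow> (nat \<Rightarrow> 'a \<Rightarrow> real^'m)
    \<Rightarrow> (nat \<Rightarrow> 'a \<Rightarrow> real^'n) \<Rightarrow> (nat \<Rightarrow> (nat \<Rightarrow> real^'n) \<Rightarrow> 'a \<Rightarrow> 's)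
    \<Rightarrow> (nat \<Rightarrow> (nat \<Rightarrow> 's) \<Rightarrow> real^'r) \<Rightarrow> nat \<Rightarrow> 'a \<Rightarrow> nat \<Rightarrow> real^'m" where
  "xhist A B C x1 w v sig \<gamma> 0 \<omega> = (\<lambda>_. 0)"
| "xhist A B C x1 w v sig \<gamma> (Suc k) \<omega> =
     (let h = xhist A B C x1 w v sig \<gamma> k \<omega> in
      h(Suc k := (if k = 0 then x1 \<omega> else A *v h k + B *v ctrl \<gamma> sig C v h \<omega> k + w k \<omega>)))"

definition state :: "real^'m^'m \<Rightarrow> real^'r^'m \<Rightarrow> real^'m^'n \<Rightarrow> ('a \<Rightarrow> real^'m) \<Rightarrow> (nat \<Rightarrow> 'a \<Rightarrow> real^'m)
    \<Rightarrow> (nat \<Rightarrow> 'a \<Rightarrow> real^'n) \<Rightarrow> (nat \<Rightarrow> (nat \<Rightarrow> real^'n) \<Rightarrow> 'a \<Rightarrow> 's)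
    \<Rightarrow> (nat \<Rightarrow> (nat \<Rightarrow> 's) \<Rightarrow> real^'r) \<Rightarrow> nat \<Rightarrow> 'a \<Rightarrow> real^'m" where
  "state A B C x1 w v sig \<gamma> k \<omega> = xhist A B C x1 w v sig \<gamma> k \<omega> k"

definition control :: "real^'m^'m \<Rightarrow> real^'r^'m \<Rightarrow> real^'m^'n \<Rightarrow> ('a \<Rightarrow> real^'m) \<Rightarrow> (nat \<Rightarrow> 'a \<Rightarrow> real^'m)
    \<Rightarrow> (nat \<Rightarrow> 'a \<Rightarrow> real^'n) \<Rightarrow> (nat \<Rightarrow> (nat \<Rightarrow> real^'n) \<Rightarrow> 'a \<Rightarrow> 's)
    \<Rightarrow> (nat \<Rightarrow> (nat \<Rightarrow> 's) \<Rightarrow> real^'r) \<Rightarrow> nat \<Rightarrow> 'a \<Rightarrow> real^'r" where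
  "control A B C x1 w v sig \<gamma> k \<omega> = ctrl \<gamma> sig C v (xhist A B C x1 w v sig \<gamma> k \<omega>) \<omega> k"

definition state_cost :: "'a measure \<Rightarrow> real^'m^'m \<Rightarrow> real^'r^'m \<Rightarrow> real^'m^'n \<Rightarrow> ('a \<Rightarrow> real^'m)
    \<Rightarrow> (nat \<Rightarrow> 'a \<Rightarrow> real^'m) \<Rightarrow> (nat \<Rightarrow> 'a \<Rightarrow> real^'n) \<Rightarrow> nat
    \<Rightarrow> (nat \<Rightarrow> (nat \<Rightarrow> real^'n) \<Rightarrow> 'a \<Rightarrow> 's) \<Rightarrow> real^'m^'m
    \<Rightarrow> (nat \<Rightarrow> (nat \<Rightarrow> 's) \<Rightarrow> real^'r) \<Rightarrow> ennreal" where
  "state_cost M A B C x1 w v \<kappa> sig Q \<gamma> =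
     (\<Sum>k\<in>{1..\<kappa>}. \<integral>\<^sup>+\<omega>. ennreal (qf Q (state A B C x1 w v sig \<gamma> (k + 1) \<omega>)) \<partial>M)"

definition control_cost :: "'a measure \<Rightarrow> real^'m^'m \<Rightarrow> real^'r^'m \<Rightarrow> real^'m^'n \<Rightarrow> ('a \<Rightarrow> real^'m)
    \<Rightarrow> (nat \<Rightarrow> 'a \<Rightarrow> real^'m) \<Rightarrow> (nat \<Rightarrow> 'a \<Rightarrow> real^'n) \<Rightarrow> nat
    \<Rightarrow> (nat \<Rightarrow> (nat \<Rightarrow> real^'n) \<Rightarrow> 'a \<Rightarrow> 's) \<Rightarrow> real^'r^'r
    \<Rightarrow> (nat \<Rightarrow> (nat \<Rightarrow> 's) \<Rightarrow> real^'r) \<Rightarrow> ennreal" where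
  "control_cost M A B C x1 w v \<kappa> sig R \<gamma> =
     (\<Sum>k\<in>{1..\<kappa>}. \<integral>\<^sup>+\<omega>. ennreal (qf R (control A B C x1 w v sig \<gamma> k \<omega>)) \<partial>M)"

definition UC :: "'a measure \<Rightarrow> real^'m^'m \<Rightarrow> real^'r^'m \<Rightarrow> real^'m^'n \<Rightarrow> ('a \<Rightarrow> real^'m)
    \<Rightarrow> (nat \<Rightarrow> 'a \<Rightarrow> real^'m) \<Rightarrow> (nat \<Rightarrow> 'a \<Rightarrow> real^'n) \<Rightarrow> nat
    \<Rightarrow> (nat \<Rightarrow> (nat \<Rightarrow> real^'n) \<Rightarrow> 'a \<Rightarrow> 's) \<Rightarrow> real^'m^'m \<Rightarrow> real^'r^'r
    \<Rightarrow> (nat \<Rightarrow> (nat \<Rightarrow> 's) \<Rightarrow> real^'r) \<Rightarrow> ennreal" where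
  "UC M A B C x1 w v \<kappa> sig Q R \<gamma> =
     state_cost M A B C x1 w v \<kappa> sig Q \<gamma> + control_cost M A B C x1 w v \<kappa> sig R \<gamma>"

definition admissible :: "'s measure \<Rightarrow> nat \<Rightarrow> (nat \<Rightarrow> (nat \<Rightarrow> 's) \<Rightarrow> real^'r) \<Rightarrow> bool" where
  "admissible S \<kappa> \<gamma> \<longleftrightarrow> (\<forall>k\<in>{1..\<kappa>}. \<gamma> k \<in> measurable (PiM UNIV (\<lambda>_. S)) borel)"

definition best_response :: "'a measure \<Rightarrow> real^'m^'m \<Rightarrow> real^'r^'m \<Rightarrow> real^'m^'n \<Rightarrow> ('a \<Rightarrow> real^'m)
    \<Rightarrow> (nat \<Rightarrow> 'a \<Rightarrow> real^'m) \<Rightarrow> (nat \<Rightarrow> 'a \<Rightarrow> real^'n) \<Rightarrow> nat \<Rightarrow> 's measure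
    \<Rightarrow> (nat \<Rightarrow> (nat \<Rightarrow> real^'n) \<Rightarrow> 'a \<Rightarrow> 's) \<Rightarrow> real^'m^'m \<Rightarrow> real^'r^'r
    \<Rightarrow> (nat \<Rightarrow> (nat \<Rightarrow> 's) \<Rightarrow> real^'r) \<Rightarrow> bool" where
  "best_response M A B C x1 w v \<kappa> S sig Q R \<gamma> \<longleftrightarrow> admissible S \<kappa> \<gamma> \<and>
     (\<forall>\<gamma>'. admissible S \<kappa> \<gamma>' \<longrightarrow>
        UC M A B C x1 w v \<kappa> sig Q R \<gamma> \<le> UC M A B C x1 w v \<kappa> sig Q R \<gamma>')"

text \<open>Sensor cost U_S for a family of follower policies Gam (one per type), types Om, extra type wo.\<close>
definition US :: "'a measure \<Rightarrow> real^'m^'m \<Rightarrow> real^'r^'m \<Rightarrow> real^'m^'n \<Rightarrow> ('a \<Rightarrow> real^'m)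
    \<Rightarrow> (nat \<Rightarrow> 'a \<Rightarrow> real^'m) \<Rightarrow> (nat \<Rightarrow> 'a \<Rightarrow> real^'n) \<Rightarrow> nat
    \<Rightarrow> (nat \<Rightarrow> (nat \<Rightarrow> real^'n) \<Rightarrow> 'a \<Rightarrow> 's) \<Rightarrow> 't set \<Rightarrow> 't
    \<Rightarrow> ('t \<Rightarrow> real^'m^'m) \<Rightarrow> ('t \<Rightarrow> real^'r^'r)
    \<Rightarrow> ('t \<Rightarrow> nat \<Rightarrow> (nat \<Rightarrow> 's) \<Rightarrow> real^'r) \<Rightarrow> ennreal" where
  "US M A B C x1 w v \<kappa> sig Om wo Q R Gam =
     (SUP p \<in> {p :: 't \<Rightarrow> real. (\<forall>t\<in>insert wo Om. 0 \<le> p t) \<and> sum p (insert wo Om) = 1}.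
        (\<Sum>t\<in>Om. ennreal (p t) * state_cost M A B C x1 w v \<kappa> sig (Q wo) (Gam t))
        + ennreal (p wo) * UC M A B C x1 w v \<kappa> sig (Q wo) (R wo) (Gam wo))"

definition sigLN :: "(nat \<Rightarrow> nat \<Rightarrow> nat \<Rightarrow> real^'n^'n) \<Rightarrow> (nat \<Rightarrow> 'a \<Rightarrow> nat \<Rightarrow> real^'n)
    \<Rightarrow> nat \<Rightarrow> (nat \<Rightarrow> real^'n) \<Rightarrow> 'a \<Rightarrow> nat \<Rightarrow> real^'n" where
  "sigLN Lt \<theta> k yh \<omega> = (\<lambda>i. if 1 \<le> i \<and> i \<le> k then (\<Sum>j\<in>{1..k}. Lt k i j *v yh j) + \<theta> k \<omega> i else 0)"

fun xfree :: "real^'m^'m \<Rightarrow> ('a \<Rightarrow> real^'m) \<Rightarrow> (nat \<Rightarrow> 'a \<Rightarrow> real^'m) \<Rightarrow> nat \<Rightarrow> 'a \<Rightarrow> real^'m" where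
  "xfree A x1 w 0 \<omega> = x1 \<omega>"
| "xfree A x1 w (Suc k) \<omega> = (if k = 0 then x1 \<omega> else A *v xfree A x1 w k \<omega> + w k \<omega>)"

definition sfree :: "real^'m^'m \<Rightarrow> real^'m^'n \<Rightarrow> ('a \<Rightarrow> real^'m) \<Rightarrow> (nat \<Rightarrow> 'a \<Rightarrow> real^'m)
    \<Rightarrow> (nat \<Rightarrow> 'a \<Rightarrow> real^'n) \<Rightarrow> (nat \<Rightarrow> nat \<Rightarrow> nat \<Rightarrow> real^'n^'n) \<Rightarrow> (nat \<Rightarrow> 'a \<Rightarrow> nat \<Rightarrow> real^'n)
    \<Rightarrow> nat \<Rightarrow> 'a \<Rightarrow> nat \<Rightarrow> real^'n" where
  "sfree A C x1 w v Lt \<theta> k \<omega> =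
     sigLN Lt \<theta> k (\<lambda>i. if 1 \<le> i \<and> i \<le> k then C *v xfree A x1 w i \<omega> + v i \<omega> else 0) \<omega>"

definition sig_gen :: "'a measure \<Rightarrow> real^'m^'m \<Rightarrow> real^'m^'n \<Rightarrow> ('a \<Rightarrow> real^'m) \<Rightarrow> (nat \<Rightarrow> 'a \<Rightarrow> real^'m)
    \<Rightarrow> (nat \<Rightarrow> 'a \<Rightarrow> real^'n) \<Rightarrow> (nat \<Rightarrow> nat \<Rightarrow> nat \<Rightarrow> real^'n^'n) \<Rightarrow> (nat \<Rightarrow> 'a \<Rightarrow> nat \<Rightarrow> real^'n)
    \<Rightarrow> nat \<Rightarrow> 'a measure" where
  "sig_gen M A C x1 w v Lt \<theta> k = sigma (space M)
     (\<Union>j\<in>{1..k}. (\<lambda>B. sfree A C x1 w v Lt \<theta> j -` B \<inter> space M) ` sets (PiM UNIV (\<lambda>_. borel)))"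

text \<open>The derived rule eta: eta_k = sum_{j\<le>k} sum_{i\<le>j} Kc k j i (block i of s~_j),
  a linear function of s~_{1:k} (with Kc chosen so that it is E{x^o_k | s~_{1:k}}).\<close>
definition sigK :: "(nat \<Rightarrow> nat \<Rightarrow> nat \<Rightarrow> real^'n^'m) \<Rightarrow> (nat \<Rightarrow> nat \<Rightarrow> nat \<Rightarrow> real^'n^'n)
    \<Rightarrow> (nat \<Rightarrow> 'a \<Rightarrow> nat \<Rightarrow> real^'n) \<Rightarrow> nat \<Rightarrow> (nat \<Rightarrow> real^'n) \<Rightarrow> 'a \<Rightarrow> real^'m" where
  "sigK Kc Lt \<theta> k yh \<omega> = (\<Sum>j\<in>{1..k}. \<Sum>i\<in>{1..j}. Kc k j i *v sigLN Lt \<theta> j yh \<omega> i)"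

end

theory Submission
  imports Defs
begin

text \<open>
  Completing squares along the Riccati recursion writes the follower's expected cost under any
  policy whose controls are measurable with respect to \<open>\<sigma>(s~\<^sub>1, \<dots>, s~\<^sub>k)\<close> as a
  constant plus \<open>\<Sum>\<^sub>k E \<parallel>u\<^sub>k + K\<^sub>k x\<^sub>k\<^sup>e\<parallel>\<^sup>2\<close> with positive definite weights,
  where \<open>x\<^sub>k\<^sup>e\<close> is \<open>\<eta>\<^sub>k\<close> plus the known effect of the inputs \<open>u\<^sub>j\<close>, \<open>j < k\<close>,
  on the state. The cross terms vanish because \<open>w\<^sub>k\<close> is independent of the past and
  \<open>x\<^sup>o\<^sub>k - \<eta>\<^sub>k\<close> is orthogonal to every square-integrable function of
  \<open>s~\<^sub>1, \<dots>, s~\<^sub>k\<close>. Both rules produce controls of this kind, since \<open>\<eta>\<^sub>j\<close> is a linear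
  function of \<open>s~\<^sub>1, \<dots>, s~\<^sub>j\<close>, and under both rules the follower can realise the
  certainty-equivalent controls \<open>u\<^sub>k = -K\<^sub>k x\<^sub>k\<^sup>e\<close> by subtracting the effect of its own past
  inputs from its signals. Hence the best responses of either rule are exactly the policies whose
  controls solve this recursion almost surely; its solution is unique, so the controls, and with
  them all costs, agree.
\<close>

lemma borel_measurable_vec_nth [measurable (raw)]:
  fixes f :: "'a \<Rightarrow> real^'n"
  shows "f \<in> borel_measurable M \<Longrightarrow> (\<lambda>x. f x $ i) \<in> borel_measurable M"
  by (rule measurable_compose[OF _ borel_measurable_nth])

lemma borel_measurable_matrix_vector_mult [measurable (raw)]:
  fixes f :: "'a \<Rightarrow> real^'n"
  assumes "f \<in> borel_measurable M"
  shows "(\<lambda>x. (N::real^'n^'m) *v f x) \<in> borel_measurable M"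
  by (rule borel_measurable_continuous_on[OF _ assms])
     (intro linear_continuous_on matrix_vector_mul_bounded_linear)

lemma inner_transpose_mult: "(x::real^'n) \<bullet> (transpose N *v y) = (N *v x) \<bullet> y"
  by (simp add: dot_lmul_matrix[symmetric] inner_commute)

lemma inner_matrix_vector_as_sum:
  "(a::real^'n) \<bullet> (N *v b) = (\<Sum>c\<in>UNIV. (transpose N *v a) $ c * b $ c)"
  using inner_transpose_mult[of a "transpose N" b] by (simp add: inner_vec_def inner_commute)

lemma transpose_add: "transpose (P1 + P2) = transpose P1 + transpose (P2::real^'n^'m)"
  by (simp add: transpose_def vec_eq_iff)

lemma transpose_diff: "transpose (P1 - P2) = transpose P1 - transpose (P2::real^'n^'m)"
  by (simp add: transpose_def vec_eq_iff)

lemma qf_add_matrix: "qf (P1 + P2) z = qf P1 z + qf P2 z"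
  by (simp add: qf_def matrix_vector_mult_add_rdistrib inner_add_right)

lemma qf_diff_matrix: "qf (P1 - P2) z = qf P1 z - qf P2 z"
  by (simp add: qf_def matrix_vector_mult_diff_rdistrib inner_diff_right)

lemma symmetric_inner_swap: "transpose P = P \<Longrightarrow> (a::real^'n) \<bullet> (P *v b) = b \<bullet> (P *v a)"
  by (metis inner_transpose_mult inner_commute)

lemma qf_add_vector:
  "transpose P = P \<Longrightarrow> qf P (a + b) = qf P a + 2 * (a \<bullet> (P *v b)) + qf P b"
  unfolding qf_def using symmetric_inner_swap[of P a b]
  by (simp add: matrix_vector_right_distrib inner_add_left inner_add_right)

lemma qf_congruence: "qf (transpose N ** P ** N) z = qf P (N *v z)"
proof -
  have "(transpose N ** P ** N) *v z = transpose N *v (P *v (N *v z))"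
    by (simp only: matrix_vector_mul_assoc matrix_mul_assoc)
  then show ?thesis unfolding qf_def by (simp only: inner_transpose_mult)
qed

lemma qf_scaleR: "qf P (c *\<^sub>R z) = c\<^sup>2 * qf P z"
  by (simp add: qf_def matrix_vector_mult_scaleR power2_eq_square)

lemma psd_mat_qf_nonneg: "psd_mat P \<Longrightarrow> 0 \<le> qf P z"
  by (simp add: psd_mat_def qf_def)

lemma pd_mat_imp_psd_mat: "pd_mat P \<Longrightarrow> psd_mat P"
  unfolding pd_mat_def psd_mat_def by (metis inner_zero_left order.strict_implies_order order_refl)

lemma psd_mat_add: "psd_mat P1 \<Longrightarrow> psd_mat P2 \<Longrightarrow> psd_mat (P1 + P2)"
  by (simp add: psd_mat_def transpose_add matrix_vector_mult_add_rdistrib inner_add_right)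

lemma psd_mat_zero: "psd_mat (0::real^'m^'m)"
  by (simp add: psd_mat_def transpose_def vec_eq_iff)

lemma pd_mat_qf_lower_bound:
  assumes "pd_mat (P::real^'r^'r)"
  obtains c where "c > 0" "\<And>z. c * (z \<bullet> z) \<le> qf P z"
proof -
  let ?S = "sphere (0::real^'r) 1"
  have "axis undefined 1 \<in> ?S" by simp
  then have "?S \<noteq> {}" by blast
  moreover have "continuous_on ?S (qf P)"
    unfolding qf_def
    by (intro continuous_intros
          continuous_on_compose2[OF linear_continuous_on[OF matrix_vector_mul_bounded_linear]]) auto
  ultimately obtain z0 where z0: "z0 \<in> ?S" "\<And>y. y \<in> ?S \<Longrightarrow> qf P z0 \<le> qf P y"
    using continuous_attains_inf[of ?S "qf P"] by auto
  have "z0 \<noteq> 0" using z0(1) by auto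
  then have pos: "qf P z0 > 0" using assms by (simp add: pd_mat_def qf_def)
  have "qf P z0 * (z \<bullet> z) \<le> qf P z" for z
  proof (cases "z = 0")
    case False
    have "qf P z0 \<le> qf P ((1 / norm z) *\<^sub>R z)" using False by (intro z0(2)) simp
    also have "\<dots> = qf P z / (norm z)\<^sup>2" by (simp add: qf_scaleR power_divide)
    finally show ?thesis using False by (simp add: field_simps power2_norm_eq_inner)
  qed (simp add: qf_def)
  with pos that show ?thesis by blast
qed

lemma pd_mat_solvable:
  assumes "pd_mat (L::real^'r^'r)"
  shows "\<exists>K. L ** K = T"
proof -
  have "\<forall>x. L *v x = 0 \<longrightarrow> x = 0" using assms by (auto simp: pd_mat_def)
  then obtain Li where "Li ** L = mat 1" using matrix_left_invertible_ker by blast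
  then have "L ** (Li ** T) = T" by (simp add: matrix_left_right_inverse matrix_mul_assoc)
  then show ?thesis by blast
qed

context prob_space
begin

definition sq_integrable :: "('a \<Rightarrow> real) \<Rightarrow> bool" where
  "sq_integrable f \<longleftrightarrow> f \<in> borel_measurable M \<and> integrable M (\<lambda>x. (f x)\<^sup>2)"

lemma sq_integrable_measurable: "sq_integrable f \<Longrightarrow> f \<in> borel_measurable M"
  by (simp add: sq_integrable_def)

lemma sq_integrable_integrable: "sq_integrable f \<Longrightarrow> integrable M f"
  by (simp add: sq_integrable_def square_integrable_imp_integrable)

lemma sq_integrable_mult_integrable:
  assumes "sq_integrable f" "sq_integrable g"
  shows "integrable M (\<lambda>x. f x * g x)"
proof (rule Bochner_Integration.integrable_bound)
  show "integrable M (\<lambda>x. (f x)\<^sup>2 + (g x)\<^sup>2)" using assms by (simp add: sq_integrable_def)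
  show "(\<lambda>x. f x * g x) \<in> borel_measurable M"
    using assms by (simp add: sq_integrable_def borel_measurable_times)
  have "2 * \<bar>f x * g x\<bar> \<le> (f x)\<^sup>2 + (g x)\<^sup>2" for x
    using sum_squares_bound[of "\<bar>f x\<bar>" "\<bar>g x\<bar>"] by (simp add: abs_mult)
  then show "AE x in M. norm (f x * g x) \<le> norm ((f x)\<^sup>2 + (g x)\<^sup>2)"
    by (intro AE_I2) (smt (verit) abs_ge_zero real_norm_def)
qed

lemma sq_integrable_const [simp]: "sq_integrable (\<lambda>x. c)"
  by (simp add: sq_integrable_def)

lemma sq_integrable_add:
  assumes "sq_integrable f" "sq_integrable g"
  shows "sq_integrable (\<lambda>x. f x + g x)"
proof -
  have "(\<lambda>x. (f x + g x)\<^sup>2) = (\<lambda>x. (f x)\<^sup>2 + (g x)\<^sup>2 + 2 * (f x * g x))"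
    by (simp add: power2_sum algebra_simps)
  then show ?thesis
    using assms sq_integrable_mult_integrable[OF assms]
    by (simp add: sq_integrable_def borel_measurable_add)
qed

lemma sq_integrable_scale: "sq_integrable f \<Longrightarrow> sq_integrable (\<lambda>x. c * f x)"
  by (simp add: sq_integrable_def power_mult_distrib borel_measurable_times)

lemma sq_integrable_sum:
  "(\<And>i. i \<in> I \<Longrightarrow> sq_integrable (f i)) \<Longrightarrow> sq_integrable (\<lambda>x. \<Sum>i\<in>I. f i x)"
  by (induction I rule: infinite_finite_induct) (simp_all add: sq_integrable_add)

definition vec_sq_integrable :: "('a \<Rightarrow> real^'n) \<Rightarrow> bool" where
  "vec_sq_integrable X \<longleftrightarrow> (\<forall>i. sq_integrable (\<lambda>x. X x $ i))"

lemma vec_sq_integrable_add: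
  "vec_sq_integrable X \<Longrightarrow> vec_sq_integrable Y \<Longrightarrow> vec_sq_integrable (\<lambda>x. X x + Y x)"
  by (simp add: vec_sq_integrable_def sq_integrable_add)

lemma vec_sq_integrable_scaleR:
  "vec_sq_integrable X \<Longrightarrow> vec_sq_integrable (\<lambda>x. c *\<^sub>R X x)"
  by (simp add: vec_sq_integrable_def sq_integrable_scale)

lemma vec_sq_integrable_diff:
  "vec_sq_integrable X \<Longrightarrow> vec_sq_integrable Y \<Longrightarrow> vec_sq_integrable (\<lambda>x. X x - Y x)"
  using vec_sq_integrable_add[of X "\<lambda>x. (-1) *\<^sub>R Y x"] vec_sq_integrable_scaleR[of Y "-1"]
  by simp

lemma vec_sq_integrable_uminus: "vec_sq_integrable X \<Longrightarrow> vec_sq_integrable (\<lambda>x. - X x)"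
  using vec_sq_integrable_scaleR[of X "-1"] by simp

lemma vec_sq_integrable_const [simp]: "vec_sq_integrable (\<lambda>x. c)"
  by (simp add: vec_sq_integrable_def)

lemma vec_sq_integrable_sum:
  "(\<And>i. i \<in> I \<Longrightarrow> vec_sq_integrable (f i)) \<Longrightarrow> vec_sq_integrable (\<lambda>x. \<Sum>i\<in>I. f i x)"
  unfolding vec_sq_integrable_def by (auto simp: sum_component intro!: sq_integrable_sum)

lemma vec_sq_integrable_matrix_vector_mult:
  "vec_sq_integrable X \<Longrightarrow> vec_sq_integrable (\<lambda>x. (N::real^'n^'m) *v X x)"
  unfolding vec_sq_integrable_def matrix_vector_mult_def
  by (auto intro!: sq_integrable_sum sq_integrable_scale)

lemma vec_sq_integrable_inner_integrable:
  "vec_sq_integrable X \<Longrightarrow> vec_sq_integrable Y \<Longrightarrow> integrable M (\<lambda>x. X x \<bullet> Y x)"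
  unfolding vec_sq_integrable_def inner_vec_def by (auto intro!: sq_integrable_mult_integrable)

lemma vec_sq_integrable_qf_integrable:
  "vec_sq_integrable X \<Longrightarrow> integrable M (\<lambda>x. qf N (X x))"
  unfolding qf_def
  by (intro vec_sq_integrable_inner_integrable vec_sq_integrable_matrix_vector_mult)

lemma centered_normal_rv_moments:
  assumes "centered_normal_rv M f"
  shows "sq_integrable f" "integral\<^sup>L M f = 0"
proof -
  have [measurable]: "f \<in> borel_measurable M" using assms by (simp add: centered_normal_rv_def)
  have "integrable (distr M borel f) (\<lambda>y. y\<^sup>2) \<and> integral\<^sup>L (distr M borel f) (\<lambda>y. y) = 0"
  proof (cases "distr M borel f = return borel 0")
    case True
    then show ?thesis by (simp add: integrable_iff_bounded nn_integral_return integral_return)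
  next
    case False
    then obtain \<sigma> where "\<sigma> > 0" and d: "distr M borel f = density lborel (normal_density 0 \<sigma>)"
      using assms by (auto simp: centered_normal_rv_def)
    with integrable_normal_moment[of \<sigma> 0 2] integral_normal_moment_nz_1[of \<sigma> 0]
    show ?thesis unfolding d by (simp add: integrable_density integral_density)
  qed
  then show "sq_integrable f" "integral\<^sup>L M f = 0"
    by (simp_all add: sq_integrable_def integrable_distr_eq integral_distr)
qed

lemma centered_gaussian_vec_moments:
  assumes "centered_gaussian_vec M X"
  shows "vec_sq_integrable X" "integral\<^sup>L M (\<lambda>\<omega>. X \<omega> $ c) = 0"
proof -
  have "centered_normal_rv M (\<lambda>\<omega>. X \<omega> $ c)" for c
    using assms[unfolded centered_gaussian_vec_def, rule_format, of "axis c 1"]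
    by (simp add: inner_axis')
  from centered_normal_rv_moments[OF this] show "vec_sq_integrable X" "integral\<^sup>L M (\<lambda>\<omega>. X \<omega> $ c) = 0"
    by (simp_all add: vec_sq_integrable_def)
qed

lemma centered_gaussian_block_sq_integrable:
  fixes T :: "'a \<Rightarrow> nat \<Rightarrow> real^'n"
  assumes "centered_gaussian_block M k T" "1 \<le> i" "i \<le> k"
  shows "vec_sq_integrable (\<lambda>\<omega>. T \<omega> i)"
  unfolding vec_sq_integrable_def
proof
  fix a :: 'n
  let ?c = "\<lambda>i'. if i' = i then axis a 1 else 0"
  have "(\<Sum>i'\<in>{1..k}. ?c i' \<bullet> T \<omega> i') = (\<Sum>i'\<in>{1..k}. if i' = i then T \<omega> i $ a else 0)"
    for \<omega> by (intro sum.cong refl) (simp add: inner_axis')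
  also have "\<dots> \<omega> = T \<omega> i $ a" for \<omega> using assms(2,3) by simp
  finally have "centered_normal_rv M (\<lambda>\<omega>. T \<omega> i $ a)"
    using assms(1)[unfolded centered_gaussian_block_def, rule_format, of ?c] by simp
  then show "sq_integrable (\<lambda>\<omega>. T \<omega> i $ a)" by (rule centered_normal_rv_moments)
qed

end

section \<open>The Riccati recursion\<close>

locale riccati =
  fixes A :: "real^'m^'m" and B :: "real^'r^'m" and Q :: "real^'m^'m" and R :: "real^'r^'r"
  assumes psd_Q: "psd_mat Q" and pd_R: "pd_mat R"
begin

definition gain_weight :: "real^'m^'m \<Rightarrow> real^'r^'r" where
  "gain_weight P = R + transpose B ** P ** B"

definition gain :: "real^'m^'m \<Rightarrow> real^'m^'r" where
  "gain P = (SOME K. gain_weight P ** K = transpose B ** P ** A)"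

definition riccati_step :: "real^'m^'m \<Rightarrow> real^'m^'m" where
  "riccati_step P = transpose A ** P ** A - transpose (gain P) ** gain_weight P ** gain P"

lemma qf_gain_weight: "qf (gain_weight P) u = qf R u + qf P (B *v u)"
  by (simp add: gain_weight_def qf_add_matrix qf_congruence)

lemma pd_mat_gain_weight:
  assumes "psd_mat P"
  shows "pd_mat (gain_weight P)"
proof -
  have "transpose P = P" "transpose R = R" using assms pd_R by (auto simp: psd_mat_def pd_mat_def)
  then have "transpose (gain_weight P) = gain_weight P"
    by (simp add: gain_weight_def transpose_add matrix_transpose_mul matrix_mul_assoc)
  moreover have "0 < qf (gain_weight P) z" if "z \<noteq> 0" for z
    using that pd_R psd_mat_qf_nonneg[OF assms, of "B *v z"]
    by (simp add: qf_gain_weight) (simp add: pd_mat_def qf_def add_pos_nonneg)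
  ultimately show ?thesis by (simp add: pd_mat_def qf_def)
qed

lemma gain_weight_mult_gain:
  "psd_mat P \<Longrightarrow> gain_weight P ** gain P = transpose B ** P ** A"
  unfolding gain_def using pd_mat_solvable[OF pd_mat_gain_weight] by (rule someI_ex)

lemma qf_completion_of_squares:
  assumes "psd_mat P"
  shows "qf P (A *v x + B *v u) + qf R u
         = qf (riccati_step P) x + qf (gain_weight P) (u + gain P *v x)"
proof -
  let ?K = "gain P" and ?L = "gain_weight P"
  have sP: "transpose P = P" using assms by (simp add: psd_mat_def)
  have sL: "transpose ?L = ?L" using pd_mat_gain_weight[OF assms] by (simp add: pd_mat_def)
  have "?L *v (?K *v x) = transpose B *v (P *v (A *v x))"
    using gain_weight_mult_gain[OF assms] by (simp only: matrix_vector_mul_assoc matrix_mul_assoc)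
  then have cross: "u \<bullet> (?L *v (?K *v x)) = (A *v x) \<bullet> (P *v (B *v u))"
    by (simp only: inner_transpose_mult symmetric_inner_swap[OF sP])
  have "qf (riccati_step P) x = qf P (A *v x) - qf ?L (?K *v x)"
    by (simp add: riccati_step_def qf_diff_matrix qf_congruence)
  then show ?thesis
    using cross qf_add_vector[OF sP, of "A *v x" "B *v u"] qf_add_vector[OF sL, of u "?K *v x"]
      qf_gain_weight[of P u]
    by linarith
qed

lemma psd_mat_riccati_step:
  assumes "psd_mat P"
  shows "psd_mat (riccati_step P)"
proof -
  have "transpose P = P" "transpose (gain_weight P) = gain_weight P"
    using assms pd_mat_gain_weight[OF assms] by (auto simp: psd_mat_def pd_mat_def)
  then have "transpose (riccati_step P) = riccati_step P"
    by (simp add: riccati_step_def transpose_diff matrix_transpose_mul matrix_mul_assoc)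
  moreover have "0 \<le> qf (riccati_step P) z" for z
  proof -
    have "qf (riccati_step P) z = qf P (A *v z + B *v - (gain P *v z)) + qf R (- (gain P *v z))"
      using qf_completion_of_squares[OF assms, of z "- (gain P *v z)"] by (simp add: qf_def)
    then show ?thesis
      using psd_mat_qf_nonneg[OF assms] psd_mat_qf_nonneg[OF pd_mat_imp_psd_mat[OF pd_R]]
      by (metis add_nonneg_nonneg)
  qed
  ultimately show ?thesis by (simp add: psd_mat_def qf_def)
qed

text \<open>\<open>cost_to_go n\<close> is the Riccati matrix \<open>n\<close> steps before the horizon.\<close>
fun cost_to_go :: "nat \<Rightarrow> real^'m^'m" where
  "cost_to_go 0 = 0"
| "cost_to_go (Suc n) = riccati_step (Q + cost_to_go n)"

lemma psd_mat_cost_to_go: "psd_mat (cost_to_go n)"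
  by (induction n) (simp_all add: psd_mat_zero psd_mat_riccati_step psd_mat_add psd_Q)

end

text \<open>The contribution of the inputs \<open>u 1, \<dots>, u (k - 1)\<close> to the state \<open>x k\<close>.\<close>
fun input_response :: "real^'m^'m \<Rightarrow> real^'r^'m \<Rightarrow> nat \<Rightarrow> (nat \<Rightarrow> real^'r) \<Rightarrow> real^'m" where
  "input_response A B 0 u = 0"
| "input_response A B (Suc k) u = (if k = 0 then 0 else A *v input_response A B k u + B *v u k)"

lemma input_response_cong:
  "(\<And>j. 1 \<le> j \<Longrightarrow> j < k \<Longrightarrow> u j = u' j) \<Longrightarrow> input_response A B k u = input_response A B k u'"
proof (induction k)
  case (Suc k) then show ?case by (cases "k = 0") auto
qed simp

lemma borel_measurable_input_response:
  "(\<And>j. 1 \<le> j \<Longrightarrow> j < k \<Longrightarrow> U j \<in> borel_measurable F) \<Longrightarrow>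
   (\<lambda>\<omega>. input_response A B k (\<lambda>j. U j \<omega>)) \<in> borel_measurable F"
proof (induction k)
  case (Suc k) then show ?case by (cases "k = 0") (auto intro!: borel_measurable_add)
qed simp

lemma (in prob_space) vec_sq_integrable_input_response:
  "(\<And>j. 1 \<le> j \<Longrightarrow> j < k \<Longrightarrow> vec_sq_integrable (U j)) \<Longrightarrow>
   vec_sq_integrable (\<lambda>\<omega>. input_response A B k (\<lambda>j. U j \<omega>))"
proof (induction k)
  case (Suc k) then show ?case
    by (cases "k = 0") (auto intro!: vec_sq_integrable_add vec_sq_integrable_matrix_vector_mult)
qed simp

lemma xhist_upto: "i \<le> k \<Longrightarrow> xhist A B C x1 w v sig \<gamma> k \<omega> i = state A B C x1 w v sig \<gamma> i \<omega>"
  unfolding state_def by (induction k) (auto simp: Let_def le_Suc_eq)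

lemma state_Suc:
  "state A B C x1 w v sig \<gamma> (Suc k) \<omega> =
   (if k = 0 then x1 \<omega>
    else A *v state A B C x1 w v sig \<gamma> k \<omega> + B *v control A B C x1 w v sig \<gamma> k \<omega> + w k \<omega>)"
  by (simp add: state_def control_def Let_def)

lemma state_superposition:
  "1 \<le> k \<Longrightarrow> state A B C x1 w v sig \<gamma> k \<omega> =
     xfree A x1 w k \<omega> + input_response A B k (\<lambda>j. control A B C x1 w v sig \<gamma> j \<omega>)"
proof (induction k)
  case (Suc k) then show ?case by (cases "k = 0") (simp_all add: state_Suc algebra_simps)
qed simp

lemma control_eq_policy:
  "control A B C x1 w v sig \<gamma> k \<omega> =
   \<gamma> k (\<lambda>j. if 1 \<le> j \<and> j \<le> k
             then sig j (ymeas C v (\<lambda>i. state A B C x1 w v sig \<gamma> i \<omega>) \<omega> j) \<omega> else undefined)"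
proof -
  have "ymeas C v (xhist A B C x1 w v sig \<gamma> k \<omega>) \<omega> j =
        ymeas C v (\<lambda>i. state A B C x1 w v sig \<gamma> i \<omega>) \<omega> j" if "j \<le> k" for j
    using that by (auto simp: ymeas_def xhist_upto)
  then show ?thesis
    unfolding control_def ctrl_def shist_def by (intro arg_cong[where f="\<gamma> k"]) auto
qed

definition sigLN_input :: "(nat \<Rightarrow> nat \<Rightarrow> nat \<Rightarrow> real^'n^'n) \<Rightarrow> real^'m^'m \<Rightarrow> real^'r^'m
    \<Rightarrow> real^'m^'n \<Rightarrow> nat \<Rightarrow> (nat \<Rightarrow> real^'r) \<Rightarrow> nat \<Rightarrow> real^'n" where
  "sigLN_input Lt A B C j u =
     (\<lambda>i. if 1 \<le> i \<and> i \<le> j then (\<Sum>l\<in>{1..j}. Lt j i l *v (C *v input_response A B l u)) else 0)"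

definition sigK_input :: "(nat \<Rightarrow> nat \<Rightarrow> nat \<Rightarrow> real^'n^'m) \<Rightarrow> (nat \<Rightarrow> nat \<Rightarrow> nat \<Rightarrow> real^'n^'n)
    \<Rightarrow> real^'m^'m \<Rightarrow> real^'r^'m \<Rightarrow> real^'m^'n \<Rightarrow> nat \<Rightarrow> (nat \<Rightarrow> real^'r) \<Rightarrow> real^'m" where
  "sigK_input Kc Lt A B C k u = (\<Sum>j\<in>{1..k}. \<Sum>i\<in>{1..j}. Kc k j i *v sigLN_input Lt A B C j u i)"

text \<open>The signal \<open>\<eta>\<^sub>k\<close> of the derived rule evaluated on the control-free measurements; by
  hypothesis this is \<open>E{x\<^sup>o\<^sub>k | s~\<^sub>1, \<dots>, s~\<^sub>k}\<close>.\<close>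
definition sigK_free :: "(nat \<Rightarrow> nat \<Rightarrow> nat \<Rightarrow> real^'n^'m) \<Rightarrow> real^'m^'m \<Rightarrow> real^'m^'n
    \<Rightarrow> ('a \<Rightarrow> real^'m) \<Rightarrow> (nat \<Rightarrow> 'a \<Rightarrow> real^'m) \<Rightarrow> (nat \<Rightarrow> 'a \<Rightarrow> real^'n)
    \<Rightarrow> (nat \<Rightarrow> nat \<Rightarrow> nat \<Rightarrow> real^'n^'n) \<Rightarrow> (nat \<Rightarrow> 'a \<Rightarrow> nat \<Rightarrow> real^'n) \<Rightarrow> nat \<Rightarrow> 'a \<Rightarrow> real^'m" where
  "sigK_free Kc A C x1 w v Lt \<theta> k \<omega> =
     (\<Sum>j\<in>{1..k}. \<Sum>i\<in>{1..j}. Kc k j i *v sfree A C x1 w v Lt \<theta> j \<omega> i)"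

lemma sigLN_input_cong:
  "(\<And>m. 1 \<le> m \<Longrightarrow> m < j \<Longrightarrow> u m = u' m) \<Longrightarrow> sigLN_input Lt A B C j u = sigLN_input Lt A B C j u'"
  unfolding sigLN_input_def
  by (intro ext if_cong refl sum.cong arg_cong[where f="\<lambda>z. _ *v (C *v z)"] input_response_cong)
     auto

lemma sigK_input_cong:
  "(\<And>m. 1 \<le> m \<Longrightarrow> m < k \<Longrightarrow> u m = u' m) \<Longrightarrow> sigK_input Kc Lt A B C k u = sigK_input Kc Lt A B C k u'"
  unfolding sigK_input_def
  by (intro sum.cong refl arg_cong[where f="\<lambda>z. _ *v z i" for i] sigLN_input_cong) auto

lemma borel_measurable_sigLN_input:
  "(\<And>m. 1 \<le> m \<Longrightarrow> m < j \<Longrightarrow> U m \<in> borel_measurable F) \<Longrightarrow>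
   (\<lambda>\<omega>. sigLN_input Lt A B C j (\<lambda>m. U m \<omega>) i) \<in> borel_measurable F"
  unfolding sigLN_input_def
  by (cases "1 \<le> i \<and> i \<le> j")
     (auto intro!: borel_measurable_sum borel_measurable_matrix_vector_mult
        borel_measurable_input_response)

lemma borel_measurable_sigK_input:
  "(\<And>m. 1 \<le> m \<Longrightarrow> m < k \<Longrightarrow> U m \<in> borel_measurable F) \<Longrightarrow>
   (\<lambda>\<omega>. sigK_input Kc Lt A B C k (\<lambda>m. U m \<omega>)) \<in> borel_measurable F"
  unfolding sigK_input_def
  by (intro borel_measurable_sum borel_measurable_matrix_vector_mult borel_measurable_sigLN_input)
     auto

lemma sigLN_superposition:
  assumes "1 \<le> j'" "j' \<le> j"
    and xs: "\<And>l. 1 \<le> l \<Longrightarrow> xs l = xfree A x1 w l \<omega> + input_response A B l u"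
  shows "sigLN Lt \<theta> j' (ymeas C v xs \<omega> j) \<omega> =
         (\<lambda>i. sfree A C x1 w v Lt \<theta> j' \<omega> i + sigLN_input Lt A B C j' u i)"
proof (rule ext)
  fix i
  have "(\<Sum>l\<in>{1..j'}. Lt j' i l *v ymeas C v xs \<omega> j l) =
        (\<Sum>l\<in>{1..j'}. Lt j' i l *v (if 1 \<le> l \<and> l \<le> j' then C *v xfree A x1 w l \<omega> + v l \<omega> else 0))
        + (\<Sum>l\<in>{1..j'}. Lt j' i l *v (C *v input_response A B l u))"
    unfolding sum.distrib[symmetric]
    using assms by (intro sum.cong refl) (auto simp: ymeas_def xs algebra_simps)
  then show "sigLN Lt \<theta> j' (ymeas C v xs \<omega> j) \<omega> i =
             sfree A C x1 w v Lt \<theta> j' \<omega> i + sigLN_input Lt A B C j' u i"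
    unfolding sigLN_def sfree_def sigLN_input_def by auto
qed

lemma sigK_superposition:
  assumes "\<And>l. 1 \<le> l \<Longrightarrow> xs l = xfree A x1 w l \<omega> + input_response A B l u"
  shows "sigK Kc Lt \<theta> j (ymeas C v xs \<omega> j) \<omega> =
         sigK_free Kc A C x1 w v Lt \<theta> j \<omega> + sigK_input Kc Lt A B C j u"
  unfolding sigK_def sigK_free_def sigK_input_def sum.distrib[symmetric]
  by (intro sum.cong refl)
     (auto simp: sigLN_superposition[OF _ _ assms] matrix_vector_right_distrib)

lemma (in prob_space) integral_mult_indep_subalgebras:
  fixes f g :: "'a \<Rightarrow> real"
  assumes F: "subalgebra M F" and G: "subalgebra M G" and indep: "indep_set (sets F) (sets G)"
    and f: "f \<in> borel_measurable F" "integrable M f"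
    and g: "g \<in> borel_measurable G" "integrable M g"
  shows "(\<integral>\<omega>. f \<omega> * g \<omega> \<partial>M) = integral\<^sup>L M f * integral\<^sup>L M g"
proof -
  have gen: "sigma_sets (space M) {A \<inter> space M | A. A \<in> sets N} = sets N"
    if "subalgebra M N" for N
  proof -
    have "{A \<inter> space M | A. A \<in> sets N} = sets N"
      using that sets.sets_into_space[of _ N] unfolding subalgebra_def by (auto simp: Int_absorb2)
    then show ?thesis using sets.sigma_sets_eq[of N] that by (simp add: subalgebra_def)
  qed
  have "id \<in> measurable M N" if "subalgebra M N" for N
    using that unfolding subalgebra_def by (intro measurableI) (auto dest: sets.sets_into_space)
  with F G indep have "indep_var F id G id" by (simp add: indep_var_eq gen)
  from indep_var_compose[OF this f(1) g(1)] have "indep_var borel f borel g"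
    by (simp add: comp_def)
  then show ?thesis using f(2) g(2) by (rule indep_var_lebesgue_integral)
qed

lemma Int_stable_vimages: "Int_stable {f -` B \<inter> S | B. B \<in> sets N}"
  unfolding Int_stable_def
proof (intro ballI)
  fix a b assume "a \<in> {f -` B \<inter> S | B. B \<in> sets N}" "b \<in> {f -` B \<inter> S | B. B \<in> sets N}"
  then obtain B1 B2 where "a = f -` B1 \<inter> S" "B1 \<in> sets N" "b = f -` B2 \<inter> S" "B2 \<in> sets N"
    by blast
  then show "a \<inter> b \<in> {f -` B \<inter> S | B. B \<in> sets N}" by (intro CollectI exI[of _ "B1 \<inter> B2"]) auto
qed

lemma (in prob_space) integral_inner_eq_0_if_orthogonal:
  fixes Z :: "'a \<Rightarrow> real^'n" and W :: "'a \<Rightarrow> real^'d"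
  assumes "vec_sq_integrable Z" "Z \<in> borel_measurable F" "vec_sq_integrable W"
    and orth: "\<And>f c. f \<in> borel_measurable F \<Longrightarrow> sq_integrable f \<Longrightarrow>
                 (\<integral>\<omega>. f \<omega> * W \<omega> $ c \<partial>M) = 0"
  shows "(\<integral>\<omega>. Z \<omega> \<bullet> (N *v W \<omega>) \<partial>M) = 0"
proof -
  let ?f = "\<lambda>c \<omega>. (transpose N *v Z \<omega>) $ c"
  have sq: "sq_integrable (?f c)" for c
    using vec_sq_integrable_matrix_vector_mult[OF assms(1), of "transpose N"]
    unfolding vec_sq_integrable_def by blast
  have "(\<integral>\<omega>. Z \<omega> \<bullet> (N *v W \<omega>) \<partial>M) = (\<Sum>c\<in>UNIV. \<integral>\<omega>. ?f c \<omega> * W \<omega> $ c \<partial>M)"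
    unfolding inner_matrix_vector_as_sum using sq assms(3)
    by (intro Bochner_Integration.integral_sum sq_integrable_mult_integrable)
       (auto simp: vec_sq_integrable_def)
  also have "\<dots> = 0"
    using assms(2) by (intro sum.neutral ballI orth sq) measurable
  finally show ?thesis .
qed

locale signaling_setting = prob_space M for M :: "'a measure" +
  fixes A :: "real^'m^'m" and C :: "real^'m^'n"
    and x1 :: "'a \<Rightarrow> real^'m" and w :: "nat \<Rightarrow> 'a \<Rightarrow> real^'m" and v :: "nat \<Rightarrow> 'a \<Rightarrow> real^'n"
    and Lt :: "nat \<Rightarrow> nat \<Rightarrow> nat \<Rightarrow> real^'n^'n" and \<theta> :: "nat \<Rightarrow> 'a \<Rightarrow> nat \<Rightarrow> real^'n"
    and Kc :: "nat \<Rightarrow> nat \<Rightarrow> nat \<Rightarrow> real^'n^'m" and \<kappa> :: nat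
  assumes gaussian_x1: "centered_gaussian_vec M x1"
    and gaussian_w: "\<And>k. centered_gaussian_vec M (w k)"
    and gaussian_v: "\<And>k. centered_gaussian_vec M (v k)"
    and gaussian_\<theta>: "\<And>k. centered_gaussian_block M k (\<theta> k)"
    and indep_prims: "indep_sets (prim_sets M x1 w v \<theta>) UNIV"
    and cond_exp: "\<And>k. k \<in> {1..\<kappa>} \<Longrightarrow> AE \<omega> in M. \<forall>c.
        (\<Sum>j\<in>{1..k}. \<Sum>i\<in>{1..j}. Kc k j i *v sfree A C x1 w v Lt \<theta> j \<omega> i) $ c
          = real_cond_exp M (sig_gen M A C x1 w v Lt \<theta> k) (\<lambda>\<omega>'. xfree A x1 w k \<omega>' $ c) \<omega>"
begin

abbreviation "prims \<equiv> prim_sets M x1 w v \<theta>"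
abbreviation "sf \<equiv> sfree A C x1 w v Lt \<theta>"
abbreviation "xf \<equiv> xfree A x1 w"
abbreviation "eta \<equiv> sigK_free Kc A C x1 w v Lt \<theta>"
abbreviation "info \<equiv> sig_gen M A C x1 w v Lt \<theta>"

definition past_prims :: "nat \<Rightarrow> prim set" where
  "past_prims k = insert PX1 (PW ` {1..<k} \<union> PV ` {1..k} \<union> PT ` {1..k})"

text \<open>The primitive randomness that determines the state at time \<open>k\<close> and the signals
  \<open>s~\<^sub>1, \<dots>, s~\<^sub>k\<close>; the noise \<open>w k\<close> is independent of it.\<close>
definition past :: "nat \<Rightarrow> 'a measure" where
  "past k = sigma (space M) (\<Union>p\<in>past_prims k. prims p)"

lemma prims_events: "prims p \<subseteq> events"
  using indep_prims unfolding indep_sets_def by auto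

lemma space_past [simp]: "space (past k) = space M"
  unfolding past_def using prims_events sets.sets_into_space by (intro space_measure_of) blast

lemma sets_past: "sets (past k) = sigma_sets (space M) (\<Union>p\<in>past_prims k. prims p)"
  unfolding past_def using prims_events sets.sets_into_space by (intro sets_measure_of) blast

lemma subalgebra_past: "subalgebra M (past k)"
  unfolding subalgebra_def sets_past using prims_events by (auto intro!: sets.sigma_sets_subset)

lemma measurable_past_prim:
  assumes "p \<in> past_prims k" "\<And>B. B \<in> sets N \<Longrightarrow> f -` B \<inter> space M \<in> prims p" "space N = UNIV"
  shows "f \<in> measurable (past k) N"
  using assms by (intro measurableI) (auto simp: sets_past intro: sigma_sets.Basic)

lemma borel_measurable_past_x1: "x1 \<in> borel_measurable (past k)"
  by (rule measurable_past_prim[of PX1]) (auto simp: past_prims_def prim_sets_def)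

lemma borel_measurable_past_w: "1 \<le> j \<Longrightarrow> j < k \<Longrightarrow> w j \<in> borel_measurable (past k)"
  by (rule measurable_past_prim[of "PW j"]) (auto simp: past_prims_def prim_sets_def)

lemma borel_measurable_past_v: "1 \<le> j \<Longrightarrow> j \<le> k \<Longrightarrow> v j \<in> borel_measurable (past k)"
  by (rule measurable_past_prim[of "PV j"]) (auto simp: past_prims_def prim_sets_def)

lemma borel_measurable_past_\<theta>:
  assumes "1 \<le> i" "i \<le> j" "j \<le> k"
  shows "(\<lambda>\<omega>. \<theta> j \<omega> i) \<in> borel_measurable (past k)"
proof -
  have "(\<lambda>\<omega>. mask_blocks j (\<theta> j \<omega>)) \<in> measurable (past k) (PiM UNIV (\<lambda>_. borel))"
    using assms by (intro measurable_past_prim[of "PT j"]) (auto simp: past_prims_def prim_sets_def space_PiM)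
  from measurable_component_singleton'[OF this measurable_ident, of i]
  show ?thesis using assms by (simp add: mask_blocks_def)
qed

lemma xfree_eq:
  "xf 0 = x1" "xf (Suc k) = (if k = 0 then x1 else (\<lambda>\<omega>. A *v xf k \<omega> + w k \<omega>))"
  by (auto simp: fun_eq_iff)

lemma borel_measurable_past_xfree: "j \<le> k \<Longrightarrow> xf j \<in> borel_measurable (past k)"
proof (induction j)
  case (Suc j)
  then show ?case
    using borel_measurable_past_x1 borel_measurable_past_w[of j k]
    by (auto simp: xfree_eq intro!: borel_measurable_add)
qed (simp add: xfree_eq borel_measurable_past_x1)

lemma borel_measurable_past_sfree: "j \<le> k \<Longrightarrow> (\<lambda>\<omega>. sf j \<omega> i) \<in> borel_measurable (past k)"
  unfolding sfree_def sigLN_def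
  by (cases "1 \<le> i \<and> i \<le> j")
     (auto intro!: borel_measurable_add borel_measurable_sum borel_measurable_matrix_vector_mult
        borel_measurable_past_xfree borel_measurable_past_v borel_measurable_past_\<theta>)

lemma sig_gen_generator_subset_past:
  "(\<Union>j\<in>{1..k}. (\<lambda>B. sf j -` B \<inter> space M) ` sets (PiM UNIV (\<lambda>_. borel))) \<subseteq> sets (past k)"
proof safe
  fix j X assume "j \<in> {1..k}" "X \<in> sets (PiM (UNIV::nat set) (\<lambda>_. borel :: (real^'n) measure))"
  moreover have "sf j \<in> measurable (past k) (PiM UNIV (\<lambda>_. borel))"
    using \<open>j \<in> {1..k}\<close> borel_measurable_past_sfree
    by (intro measurable_PiM_single') (auto simp: space_PiM)
  ultimately show "sf j -` X \<inter> space M \<in> sets (past k)" unfolding measurable_def by auto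
qed

lemma space_info [simp]: "space (info k) = space M"
  unfolding sig_gen_def by (rule space_measure_of) auto

lemma sets_info:
  "sets (info k) =
   sigma_sets (space M) (\<Union>j\<in>{1..k}. (\<lambda>B. sf j -` B \<inter> space M) ` sets (PiM UNIV (\<lambda>_. borel)))"
  unfolding sig_gen_def by (rule sets_measure_of) auto

lemma subalgebra_past_info: "subalgebra (past k) (info k)"
proof -
  interpret sigma_algebra "space M" "sets (past k)"
    using sets.sigma_algebra_axioms[of "past k"] by simp
  show ?thesis
    unfolding subalgebra_def sets_info using sig_gen_generator_subset_past
    by (auto intro!: sigma_sets_subset)
qed

lemma subalgebra_info: "subalgebra M (info k)"
  using subalgebra_past_info subalgebra_past unfolding subalgebra_def by auto

lemma borel_measurable_info_sfree:
  assumes "1 \<le> j" "j \<le> k"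
  shows "(\<lambda>\<omega>. sf j \<omega> i) \<in> borel_measurable (info k)"
proof -
  have "sf j \<in> measurable (info k) (PiM UNIV (\<lambda>_. borel))"
    using assms by (intro measurableI) (auto simp: sets_info space_PiM intro!: sigma_sets.Basic)
  from measurable_component_singleton'[OF this measurable_ident, of i] show ?thesis by simp
qed

lemma borel_measurable_info_eta: "k' \<le> k \<Longrightarrow> eta k' \<in> borel_measurable (info k)"
  unfolding sigK_free_def
  by (intro borel_measurable_sum borel_measurable_matrix_vector_mult borel_measurable_info_sfree)
     auto

lemma vec_sq_integrable_x1: "vec_sq_integrable x1"
  using centered_gaussian_vec_moments(1)[OF gaussian_x1] .

lemma vec_sq_integrable_w: "vec_sq_integrable (w k)"
  using centered_gaussian_vec_moments(1)[OF gaussian_w] .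

lemma vec_sq_integrable_v: "vec_sq_integrable (v k)"
  using centered_gaussian_vec_moments(1)[OF gaussian_v] .

lemma vec_sq_integrable_xfree: "vec_sq_integrable (xf j)"
  by (induction j)
     (auto simp: xfree_eq intro!: vec_sq_integrable_add vec_sq_integrable_matrix_vector_mult
        vec_sq_integrable_x1 vec_sq_integrable_w)

lemma vec_sq_integrable_sfree: "vec_sq_integrable (\<lambda>\<omega>. sf j \<omega> i)"
proof (cases "1 \<le> i \<and> i \<le> j")
  case True
  have "vec_sq_integrable (\<lambda>\<omega>. (\<Sum>l\<in>{1..j}. Lt j i l *v
          (if 1 \<le> l \<and> l \<le> j then C *v xf l \<omega> + v l \<omega> else 0)) + \<theta> j \<omega> i)"
    using True
    by (intro vec_sq_integrable_add vec_sq_integrable_sum)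
       (auto intro!: vec_sq_integrable_matrix_vector_mult vec_sq_integrable_add
          vec_sq_integrable_xfree vec_sq_integrable_v
          centered_gaussian_block_sq_integrable[OF gaussian_\<theta>])
  then show ?thesis using True by (simp add: sfree_def sigLN_def)
qed (auto simp: sfree_def sigLN_def)

lemma vec_sq_integrable_eta: "vec_sq_integrable (eta k)"
  unfolding sigK_free_def
  by (intro vec_sq_integrable_sum vec_sq_integrable_matrix_vector_mult vec_sq_integrable_sfree)

lemma orthogonal_noise:
  assumes f: "f \<in> borel_measurable (past k)" "sq_integrable f"
  shows "(\<integral>\<omega>. f \<omega> * w k \<omega> $ c \<partial>M) = 0"
proof -
  let ?I = "\<lambda>b. if b then past_prims k else {PW k}"
  let ?N = "sigma (space M) (prims (PW k))"
  have "prims (PW k) \<subseteq> Pow (space M)" using prims_events sets.sets_into_space by blast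
  then have space_N: "space ?N = space M" and sets_N: "sets ?N = sigma_sets (space M) (prims (PW k))"
    by simp_all
  have "indep_sets (\<lambda>b. sigma_sets (space M) (\<Union>i\<in>?I b. prims i)) UNIV"
  proof (rule indep_sets_collect_sigma)
    show "indep_sets prims (\<Union>b\<in>UNIV. ?I b)"
      by (rule indep_sets_mono_index[OF _ indep_prims]) auto
    show "Int_stable (prims p)" for p
      by (cases p) (simp_all add: prim_sets_def Int_stable_vimages)
    show "disjoint_family_on ?I UNIV"
      unfolding disjoint_family_on_def by (auto simp: past_prims_def)
  qed
  then have "indep_set (sets (past k)) (sets ?N)"
    unfolding indep_set_def by (rule indep_sets_cong[THEN iffD1, rotated 2]) (auto simp: sets_past sets_N)
  moreover have "subalgebra M ?N"
    unfolding subalgebra_def sets_N space_N using prims_events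
    by (auto intro!: sets.sigma_sets_subset)
  moreover have "w k -` B \<inter> space M \<in> prims (PW k)" if "B \<in> sets borel" for B
    using that by (auto simp: prim_sets_def)
  then have "(\<lambda>\<omega>. w k \<omega> $ c) \<in> borel_measurable ?N"
    by (intro borel_measurable_vec_nth measurableI) (auto simp only: space_N sets_N sigma_sets.Basic space_borel UNIV_I)
  ultimately have "(\<integral>\<omega>. f \<omega> * w k \<omega> $ c \<partial>M) = integral\<^sup>L M f * (\<integral>\<omega>. w k \<omega> $ c \<partial>M)"
    using vec_sq_integrable_w[of k] f
    by (intro integral_mult_indep_subalgebras subalgebra_past sq_integrable_integrable)
       (auto simp: vec_sq_integrable_def subalgebra_past)
  then show ?thesis using centered_gaussian_vec_moments(2)[OF gaussian_w] by simp
qed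

lemma orthogonal_estimation_error:
  assumes k: "k \<in> {1..\<kappa>}" and f: "f \<in> borel_measurable (info k)" "sq_integrable f"
  shows "(\<integral>\<omega>. f \<omega> * (xf k \<omega> $ c - eta k \<omega> $ c) \<partial>M) = 0"
proof -
  interpret finite_measure_subalgebra M "info k"
    by unfold_locales (rule subalgebra_info)
  have sx: "sq_integrable (\<lambda>\<omega>. xf k \<omega> $ c)" and se: "sq_integrable (\<lambda>\<omega>. eta k \<omega> $ c)"
    using vec_sq_integrable_xfree vec_sq_integrable_eta by (auto simp: vec_sq_integrable_def)
  have "AE \<omega> in M. eta k \<omega> $ c = real_cond_exp M (info k) (\<lambda>\<omega>'. xf k \<omega>' $ c) \<omega>"
    using cond_exp[OF k] unfolding sigK_free_def by auto
  then have "(\<integral>\<omega>. f \<omega> * eta k \<omega> $ c \<partial>M) =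
             (\<integral>\<omega>. f \<omega> * real_cond_exp M (info k) (\<lambda>\<omega>'. xf k \<omega>' $ c) \<omega> \<partial>M)"
    using sq_integrable_measurable[OF f(2)] sq_integrable_measurable[OF se]
    by (intro integral_cong_AE) auto
  also have "\<dots> = (\<integral>\<omega>. f \<omega> * xf k \<omega> $ c \<partial>M)"
    by (rule real_cond_exp_intg(2)[OF sq_integrable_mult_integrable[OF f(2) sx] f(1)
          sq_integrable_measurable[OF sx]])
  finally show ?thesis
    using sq_integrable_mult_integrable[OF f(2) sx] sq_integrable_mult_integrable[OF f(2) se]
    by (simp add: right_diff_distrib)
qed

end

lemma sum_nn_integral_eq_ennreal:
  fixes f :: "'i \<Rightarrow> 'a \<Rightarrow> real"
  assumes "\<And>k. k \<in> I \<Longrightarrow> integrable M (f k)" "\<And>k x. 0 \<le> f k x"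
  shows "(\<Sum>k\<in>I. \<integral>\<^sup>+x. ennreal (f k x) \<partial>M) = ennreal (\<Sum>k\<in>I. \<integral>x. f k x \<partial>M)"
  using assms by (simp add: nn_integral_eq_integral integral_nonneg_AE sum_ennreal)

section \<open>The follower's cost as optimal cost plus a penalty\<close>

locale lq_follower = signaling_setting M A C x1 w v Lt \<theta> Kc \<kappa> + riccati A B Q R
  for M :: "'a measure"
    and A :: "real^'m^'m" and B :: "real^'r^'m" and C :: "real^'m^'n"
    and x1 :: "'a \<Rightarrow> real^'m" and w :: "nat \<Rightarrow> 'a \<Rightarrow> real^'m" and v :: "nat \<Rightarrow> 'a \<Rightarrow> real^'n"
    and Lt :: "nat \<Rightarrow> nat \<Rightarrow> nat \<Rightarrow> real^'n^'n" and \<theta> :: "nat \<Rightarrow> 'a \<Rightarrow> nat \<Rightarrow> real^'n"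
    and Kc :: "nat \<Rightarrow> nat \<Rightarrow> nat \<Rightarrow> real^'n^'m" and \<kappa> :: nat
    and Q :: "real^'m^'m" and R :: "real^'r^'r"
begin

definition stage_weight :: "nat \<Rightarrow> real^'m^'m" where
  "stage_weight k = Q + cost_to_go (\<kappa> - k)"

definition stage_gain_weight :: "nat \<Rightarrow> real^'r^'r" where
  "stage_gain_weight k = gain_weight (stage_weight k)"

definition stage_gain :: "nat \<Rightarrow> real^'m^'r" where
  "stage_gain k = gain (stage_weight k)"

definition closed_state :: "(nat \<Rightarrow> 'a \<Rightarrow> real^'r) \<Rightarrow> nat \<Rightarrow> 'a \<Rightarrow> real^'m" where
  "closed_state U k \<omega> = xf k \<omega> + input_response A B k (\<lambda>j. U j \<omega>)"

text \<open>\<open>eta k \<omega> + input_response A B k (\<lambda>j. U j \<omega>)\<close> is the conditional mean of the state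
  given the signals, so this is the deviation of \<open>U k\<close> from the certainty-equivalent control.\<close>
definition ce_deviation :: "(nat \<Rightarrow> 'a \<Rightarrow> real^'r) \<Rightarrow> nat \<Rightarrow> 'a \<Rightarrow> real^'r" where
  "ce_deviation U k \<omega> = U k \<omega> + stage_gain k *v (eta k \<omega> + input_response A B k (\<lambda>j. U j \<omega>))"

definition estimation_error :: "nat \<Rightarrow> 'a \<Rightarrow> real^'m" where
  "estimation_error k \<omega> = xf k \<omega> - eta k \<omega>"

definition optimal_cost :: real where
  "optimal_cost =
     (\<integral>\<omega>. qf (cost_to_go \<kappa>) (x1 \<omega>) \<partial>M) +
     (\<Sum>k\<in>{1..\<kappa>}. (\<integral>\<omega>. qf (stage_weight k) (w k \<omega>) \<partial>M)
                   + (\<integral>\<omega>. qf (stage_gain_weight k) (stage_gain k *v estimation_error k \<omega>) \<partial>M))"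

definition info_adapted :: "(nat \<Rightarrow> 'a \<Rightarrow> real^'r) \<Rightarrow> bool" where
  "info_adapted U \<longleftrightarrow> (\<forall>j k. 1 \<le> j \<longrightarrow> j \<le> k \<longrightarrow> k \<le> \<kappa> \<longrightarrow> U j \<in> borel_measurable (info k))"

definition controls_sq_integrable :: "(nat \<Rightarrow> 'a \<Rightarrow> real^'r) \<Rightarrow> bool" where
  "controls_sq_integrable U \<longleftrightarrow> (\<forall>j. 1 \<le> j \<longrightarrow> j \<le> \<kappa> \<longrightarrow> vec_sq_integrable (U j))"

lemma psd_mat_stage_weight: "psd_mat (stage_weight k)"
  unfolding stage_weight_def by (rule psd_mat_add[OF psd_Q psd_mat_cost_to_go])

lemma pd_mat_stage_gain_weight: "pd_mat (stage_gain_weight k)"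
  unfolding stage_gain_weight_def by (rule pd_mat_gain_weight[OF psd_mat_stage_weight])

lemma stage_cost_identity:
  assumes "1 \<le> k" "k \<le> \<kappa>"
  shows "qf Q (closed_state U (Suc k) \<omega>) + qf R (U k \<omega>) =
     qf (cost_to_go (Suc \<kappa> - k)) (closed_state U k \<omega>)
     - qf (cost_to_go (Suc \<kappa> - Suc k)) (closed_state U (Suc k) \<omega>)
     + 2 * ((A *v closed_state U k \<omega> + B *v U k \<omega>) \<bullet> (stage_weight k *v w k \<omega>))
     + qf (stage_weight k) (w k \<omega>)
     + qf (stage_gain_weight k) (ce_deviation U k \<omega>)
     + 2 * (ce_deviation U k \<omega> \<bullet> (stage_gain_weight k *v (stage_gain k *v estimation_error k \<omega>)))
     + qf (stage_gain_weight k) (stage_gain k *v estimation_error k \<omega>)"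
proof -
  let ?x = "closed_state U k \<omega>" and ?u = "U k \<omega>" and ?P = "stage_weight k"
    and ?L = "stage_gain_weight k" and ?K = "stage_gain k"
  let ?z = "A *v ?x + B *v ?u"
  have "transpose ?P = ?P" "transpose ?L = ?L"
    using psd_mat_stage_weight pd_mat_stage_gain_weight by (auto simp: psd_mat_def pd_mat_def)
  note expand = qf_add_vector[OF this(1)] qf_add_vector[OF this(2)]
  have "closed_state U (Suc k) \<omega> = ?z + w k \<omega>"
    using assms by (simp add: closed_state_def algebra_simps)
  moreover have "qf Q (closed_state U (Suc k) \<omega>)
      = qf ?P (closed_state U (Suc k) \<omega>) - qf (cost_to_go (\<kappa> - k)) (closed_state U (Suc k) \<omega>)"
    by (simp add: stage_weight_def qf_add_matrix)
  moreover have "qf ?P ?z + qf R ?u = qf (cost_to_go (Suc (\<kappa> - k))) ?x + qf ?L (?u + ?K *v ?x)"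
    using qf_completion_of_squares[OF psd_mat_stage_weight, of k ?x ?u] assms
    by (simp add: stage_gain_weight_def stage_gain_def stage_weight_def)
  moreover have "?u + ?K *v ?x = ce_deviation U k \<omega> + ?K *v estimation_error k \<omega>"
    by (simp add: ce_deviation_def estimation_error_def closed_state_def algebra_simps)
  ultimately show ?thesis
    using assms by (simp add: expand Suc_diff_le del: cost_to_go.simps)
qed

lemma vec_sq_integrable_closed_state:
  "controls_sq_integrable U \<Longrightarrow> k \<le> Suc \<kappa> \<Longrightarrow> vec_sq_integrable (closed_state U k)"
  unfolding closed_state_def controls_sq_integrable_def
  by (intro vec_sq_integrable_add vec_sq_integrable_xfree vec_sq_integrable_input_response) auto

lemma vec_sq_integrable_ce_deviation:
  "controls_sq_integrable U \<Longrightarrow> 1 \<le> k \<Longrightarrow> k \<le> \<kappa> \<Longrightarrow> vec_sq_integrable (ce_deviation U k)"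
  unfolding ce_deviation_def controls_sq_integrable_def
  by (intro vec_sq_integrable_add vec_sq_integrable_matrix_vector_mult vec_sq_integrable_eta
        vec_sq_integrable_input_response) auto

lemma vec_sq_integrable_estimation_error: "vec_sq_integrable (estimation_error k)"
  unfolding estimation_error_def by (intro vec_sq_integrable_diff vec_sq_integrable_xfree vec_sq_integrable_eta)

lemma borel_measurable_past_closed_state:
  "info_adapted U \<Longrightarrow> k \<le> \<kappa> \<Longrightarrow> closed_state U k \<in> borel_measurable (past k)"
  unfolding closed_state_def info_adapted_def
  by (intro borel_measurable_add borel_measurable_past_xfree order_refl borel_measurable_input_response
        measurable_from_subalg[OF subalgebra_past_info]) auto

lemma borel_measurable_info_ce_deviation:
  "info_adapted U \<Longrightarrow> 1 \<le> k \<Longrightarrow> k \<le> \<kappa> \<Longrightarrow> ce_deviation U k \<in> borel_measurable (info k)"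
  unfolding ce_deviation_def info_adapted_def
  by (intro borel_measurable_add borel_measurable_matrix_vector_mult borel_measurable_info_eta
        order_refl borel_measurable_input_response) auto

text \<open>The two cross terms of \<open>stage_cost_identity\<close> vanish in expectation: the first because
  \<open>w k\<close> is independent of the past, the second because the estimation error is orthogonal to
  every square-integrable function of the signals.\<close>
lemma expected_stage_cost:
  assumes U: "info_adapted U" "controls_sq_integrable U" and k: "1 \<le> k" "k \<le> \<kappa>"
  shows "(\<integral>\<omega>. qf Q (closed_state U (Suc k) \<omega>) \<partial>M) + (\<integral>\<omega>. qf R (U k \<omega>) \<partial>M) =
     ((\<integral>\<omega>. qf (cost_to_go (Suc \<kappa> - k)) (closed_state U k \<omega>) \<partial>M)
       - (\<integral>\<omega>. qf (cost_to_go (Suc \<kappa> - Suc k)) (closed_state U (Suc k) \<omega>) \<partial>M))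
     + ((\<integral>\<omega>. qf (stage_weight k) (w k \<omega>) \<partial>M)
       + (\<integral>\<omega>. qf (stage_gain_weight k) (stage_gain k *v estimation_error k \<omega>) \<partial>M))
     + (\<integral>\<omega>. qf (stage_gain_weight k) (ce_deviation U k \<omega>) \<partial>M)"
proof -
  have X: "vec_sq_integrable (closed_state U k)" "vec_sq_integrable (closed_state U (Suc k))"
    using k by (auto intro!: vec_sq_integrable_closed_state[OF U(2)])
  have u: "vec_sq_integrable (U k)" using U(2) k by (simp add: controls_sq_integrable_def)
  have z: "vec_sq_integrable (\<lambda>\<omega>. A *v closed_state U k \<omega> + B *v U k \<omega>)"
    by (intro vec_sq_integrable_add vec_sq_integrable_matrix_vector_mult X u)
  have a: "vec_sq_integrable (ce_deviation U k)" by (rule vec_sq_integrable_ce_deviation[OF U(2) k])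
  have e: "vec_sq_integrable (\<lambda>\<omega>. stage_gain k *v estimation_error k \<omega>)"
    by (intro vec_sq_integrable_matrix_vector_mult vec_sq_integrable_estimation_error)
  have noise: "(\<integral>\<omega>. (A *v closed_state U k \<omega> + B *v U k \<omega>) \<bullet> (stage_weight k *v w k \<omega>) \<partial>M) = 0"
  proof (rule integral_inner_eq_0_if_orthogonal[OF z _ vec_sq_integrable_w])
    show "(\<lambda>\<omega>. A *v closed_state U k \<omega> + B *v U k \<omega>) \<in> borel_measurable (past k)"
      using U(1) k
      by (intro borel_measurable_add borel_measurable_matrix_vector_mult
            borel_measurable_past_closed_state measurable_from_subalg[OF subalgebra_past_info])
         (auto simp: info_adapted_def)
  qed (rule orthogonal_noise)
  have error: "(\<integral>\<omega>. ce_deviation U k \<omega> \<bullet> (stage_gain_weight k *v (stage_gain k *v estimation_error k \<omega>)) \<partial>M) = 0"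
    unfolding matrix_vector_mul_assoc
    using borel_measurable_info_ce_deviation[OF U(1) k] k
    by (intro integral_inner_eq_0_if_orthogonal[OF a _ vec_sq_integrable_estimation_error])
       (use orthogonal_estimation_error in \<open>auto simp: estimation_error_def\<close>)
  note ints = vec_sq_integrable_qf_integrable[OF X(1)] vec_sq_integrable_qf_integrable[OF X(2)]
    vec_sq_integrable_qf_integrable[OF u] vec_sq_integrable_qf_integrable[OF vec_sq_integrable_w]
    vec_sq_integrable_qf_integrable[OF a] vec_sq_integrable_qf_integrable[OF e]
    vec_sq_integrable_inner_integrable[OF z vec_sq_integrable_matrix_vector_mult[OF vec_sq_integrable_w]]
    vec_sq_integrable_inner_integrable[OF a vec_sq_integrable_matrix_vector_mult[OF e]]
  have "(\<integral>\<omega>. qf Q (closed_state U (Suc k) \<omega>) \<partial>M) + (\<integral>\<omega>. qf R (U k \<omega>) \<partial>M) =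
        (\<integral>\<omega>. qf Q (closed_state U (Suc k) \<omega>) + qf R (U k \<omega>) \<partial>M)"
    using ints by simp
  also have "\<dots> = ((\<integral>\<omega>. qf (cost_to_go (Suc \<kappa> - k)) (closed_state U k \<omega>) \<partial>M)
       - (\<integral>\<omega>. qf (cost_to_go (Suc \<kappa> - Suc k)) (closed_state U (Suc k) \<omega>) \<partial>M))
     + ((\<integral>\<omega>. qf (stage_weight k) (w k \<omega>) \<partial>M)
       + (\<integral>\<omega>. qf (stage_gain_weight k) (stage_gain k *v estimation_error k \<omega>) \<partial>M))
     + (\<integral>\<omega>. qf (stage_gain_weight k) (ce_deviation U k \<omega>) \<partial>M)"
    unfolding stage_cost_identity[OF k]
    using ints noise error by (simp del: cost_to_go.simps)
  finally show ?thesis .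
qed

end

context lq_follower
begin

abbreviation controls :: "(nat \<Rightarrow> (nat \<Rightarrow> real^'n) \<Rightarrow> 'a \<Rightarrow> 's) \<Rightarrow> (nat \<Rightarrow> (nat \<Rightarrow> 's) \<Rightarrow> real^'r)
    \<Rightarrow> nat \<Rightarrow> 'a \<Rightarrow> real^'r" where
  "controls sig \<gamma> \<equiv> control A B C x1 w v sig \<gamma>"

lemma qf_Q_nonneg: "0 \<le> qf Q z"
  by (rule psd_mat_qf_nonneg[OF psd_Q])

lemma qf_R_nonneg: "0 \<le> qf R z"
  by (rule psd_mat_qf_nonneg[OF pd_mat_imp_psd_mat[OF pd_R]])

lemma qf_stage_gain_weight_nonneg: "0 \<le> qf (stage_gain_weight k) z"
  by (rule psd_mat_qf_nonneg[OF pd_mat_imp_psd_mat[OF pd_mat_stage_gain_weight]])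

lemma optimal_cost_nonneg: "0 \<le> optimal_cost"
  unfolding optimal_cost_def
  by (intro add_nonneg_nonneg sum_nonneg integral_nonneg_AE AE_I2 psd_mat_qf_nonneg
        psd_mat_cost_to_go psd_mat_stage_weight qf_stage_gain_weight_nonneg)

lemma expected_total_cost:
  assumes U: "info_adapted U" "controls_sq_integrable U"
  shows "(\<Sum>k\<in>{1..\<kappa>}. (\<integral>\<omega>. qf Q (closed_state U (Suc k) \<omega>) \<partial>M) + (\<integral>\<omega>. qf R (U k \<omega>) \<partial>M)) =
         optimal_cost + (\<Sum>k\<in>{1..\<kappa>}. \<integral>\<omega>. qf (stage_gain_weight k) (ce_deviation U k \<omega>) \<partial>M)"
proof -
  let ?g = "\<lambda>k. \<integral>\<omega>. qf (cost_to_go (Suc \<kappa> - k)) (closed_state U k \<omega>) \<partial>M"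
  have "?g 1 = (\<integral>\<omega>. qf (cost_to_go \<kappa>) (x1 \<omega>) \<partial>M)" by (simp add: closed_state_def)
  moreover have "?g (Suc \<kappa>) = 0" by (simp add: qf_def)
  moreover have "(\<Sum>k\<in>{1..\<kappa>}. ?g k - ?g (Suc k)) = ?g 1 - ?g (Suc \<kappa>)"
    using sum_Suc_diff[of 1 \<kappa> ?g] by (simp add: sum_subtractf del: cost_to_go.simps)
  ultimately show ?thesis
    using expected_stage_cost[OF U]
    by (simp add: optimal_cost_def sum.distrib del: cost_to_go.simps)
qed

lemma UC_eq_optimal_cost_plus_deviation:
  assumes U: "info_adapted (controls sig \<gamma>)" "controls_sq_integrable (controls sig \<gamma>)"
  shows "UC M A B C x1 w v \<kappa> sig Q R \<gamma> = ennreal (optimal_cost +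
           (\<Sum>k\<in>{1..\<kappa>}. \<integral>\<omega>. qf (stage_gain_weight k) (ce_deviation (controls sig \<gamma>) k \<omega>) \<partial>M))"
proof -
  have state: "state A B C x1 w v sig \<gamma> (k + 1) = closed_state (controls sig \<gamma>) (Suc k)" for k
    by (simp add: fun_eq_iff closed_state_def state_superposition)
  have "UC M A B C x1 w v \<kappa> sig Q R \<gamma> =
        ennreal (\<Sum>k\<in>{1..\<kappa>}. \<integral>\<omega>. qf Q (closed_state (controls sig \<gamma>) (Suc k) \<omega>) \<partial>M) +
        ennreal (\<Sum>k\<in>{1..\<kappa>}. \<integral>\<omega>. qf R (controls sig \<gamma> k \<omega>) \<partial>M)"
    unfolding UC_def state_cost_def control_cost_def state using U(2)
    by (intro arg_cong2[where f="(+)"] sum_nn_integral_eq_ennreal vec_sq_integrable_qf_integrable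
          vec_sq_integrable_closed_state qf_Q_nonneg qf_R_nonneg)
       (auto simp: controls_sq_integrable_def)
  also have "\<dots> = ennreal (optimal_cost +
           (\<Sum>k\<in>{1..\<kappa>}. \<integral>\<omega>. qf (stage_gain_weight k) (ce_deviation (controls sig \<gamma>) k \<omega>) \<partial>M))"
    using expected_total_cost[OF U]
    by (subst ennreal_plus[symmetric])
       (auto simp: sum.distrib intro!: sum_nonneg integral_nonneg_AE qf_Q_nonneg qf_R_nonneg)
  finally show ?thesis .
qed

end

context lq_follower
begin

lemma info_adapted_borel_measurable:
  "info_adapted U \<Longrightarrow> 1 \<le> k \<Longrightarrow> k \<le> \<kappa> \<Longrightarrow> U k \<in> borel_measurable M"
  unfolding info_adapted_def by (auto intro: measurable_from_subalg[OF subalgebra_info])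

lemma finite_UC_imp_controls_sq_integrable:
  assumes U: "info_adapted (controls sig \<gamma>)" and fin: "UC M A B C x1 w v \<kappa> sig Q R \<gamma> < \<infinity>"
  shows "controls_sq_integrable (controls sig \<gamma>)"
  unfolding controls_sq_integrable_def vec_sq_integrable_def sq_integrable_def
proof (intro allI impI conjI)
  fix k i assume k: "1 \<le> k" "k \<le> \<kappa>"
  let ?u = "controls sig \<gamma> k"
  obtain c where c: "c > 0" "\<And>z. c * (z \<bullet> z) \<le> qf R z"
    using pd_mat_qf_lower_bound[OF pd_R] by blast
  have meas: "?u \<in> borel_measurable M" by (rule info_adapted_borel_measurable[OF U k])
  then show "(\<lambda>\<omega>. ?u \<omega> $ i) \<in> borel_measurable M" by measurable
  have "control_cost M A B C x1 w v \<kappa> sig R \<gamma> < \<infinity>"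
    using fin unfolding UC_def by (simp add: order.strict_trans1)
  then have fin: "(\<integral>\<^sup>+\<omega>. ennreal (qf R (?u \<omega>)) \<partial>M) < \<infinity>"
    unfolding control_cost_def using k by (simp add: less_top[symmetric])
  have "(?u \<omega> $ i)\<^sup>2 \<le> qf R (?u \<omega>) / c" for \<omega>
  proof -
    have "(?u \<omega> $ i)\<^sup>2 \<le> ?u \<omega> \<bullet> ?u \<omega>"
      unfolding inner_vec_def inner_real_def power2_eq_square
      by (rule member_le_sum[where f="\<lambda>j. ?u \<omega> $ j * ?u \<omega> $ j"]) auto
    also have "\<dots> \<le> qf R (?u \<omega>) / c" using c by (simp add: field_simps)
    finally show ?thesis .
  qed
  then have "(\<integral>\<^sup>+\<omega>. ennreal (norm ((?u \<omega> $ i)\<^sup>2)) \<partial>M) \<le> (\<integral>\<^sup>+\<omega>. ennreal (1/c) * ennreal (qf R (?u \<omega>)) \<partial>M)"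
    using c(1) qf_R_nonneg
    by (intro nn_integral_mono) (simp add: ennreal_mult'[symmetric] divide_inverse mult.commute)
  also have "\<dots> = ennreal (1/c) * (\<integral>\<^sup>+\<omega>. ennreal (qf R (?u \<omega>)) \<partial>M)"
    using meas by (intro nn_integral_cmult) (simp add: qf_def)
  also have "\<dots> < \<infinity>" using fin by (simp add: ennreal_mult_less_top)
  finally show "integrable M (\<lambda>\<omega>. (?u \<omega> $ i)\<^sup>2)"
    using meas by (intro integrableI_bounded) auto
qed

lemma optimal_cost_le_UC:
  assumes U: "info_adapted (controls sig \<gamma>)"
  shows "ennreal optimal_cost \<le> UC M A B C x1 w v \<kappa> sig Q R \<gamma>"
proof (cases "UC M A B C x1 w v \<kappa> sig Q R \<gamma> < \<infinity>")
  case True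
  then show ?thesis
    using UC_eq_optimal_cost_plus_deviation[OF U finite_UC_imp_controls_sq_integrable[OF U True]]
      optimal_cost_nonneg
    by (simp add: sum_nonneg integral_nonneg_AE qf_stage_gain_weight_nonneg)
qed (simp add: not_less top_unique)

lemma UC_le_optimal_cost_imp_ce:
  assumes U: "info_adapted (controls sig \<gamma>)"
    and le: "UC M A B C x1 w v \<kappa> sig Q R \<gamma> \<le> ennreal optimal_cost"
  shows "AE \<omega> in M. \<forall>k\<in>{1..\<kappa>}. ce_deviation (controls sig \<gamma>) k \<omega> = 0"
proof -
  let ?D = "\<lambda>k \<omega>. qf (stage_gain_weight k) (ce_deviation (controls sig \<gamma>) k \<omega>)"
  have sq: "controls_sq_integrable (controls sig \<gamma>)"
    using le by (intro finite_UC_imp_controls_sq_integrable[OF U]) (simp add: le_less_trans)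
  have nonneg: "0 \<le> (\<integral>\<omega>. ?D k \<omega> \<partial>M)" for k
    by (intro integral_nonneg_AE AE_I2 qf_stage_gain_weight_nonneg)
  have "(\<Sum>k\<in>{1..\<kappa>}. \<integral>\<omega>. ?D k \<omega> \<partial>M) \<le> 0"
    using le UC_eq_optimal_cost_plus_deviation[OF U sq] optimal_cost_nonneg by simp
  then have "(\<integral>\<omega>. ?D k \<omega> \<partial>M) = 0" if "k \<in> {1..\<kappa>}" for k
    using that nonneg sum_nonneg_eq_0_iff[of "{1..\<kappa>}" "\<lambda>k. \<integral>\<omega>. ?D k \<omega> \<partial>M"]
    by (simp add: antisym sum_nonneg)
  then have "AE \<omega> in M. ?D k \<omega> = 0" if "k \<in> {1..\<kappa>}" for k
    using that vec_sq_integrable_ce_deviation[OF sq]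
    by (subst integral_nonneg_eq_0_iff_AE[symmetric])
       (auto intro!: vec_sq_integrable_qf_integrable qf_stage_gain_weight_nonneg)
  then show ?thesis
  proof (intro AE_finite_allI finite_atLeastAtMost)
    fix k assume "k \<in> {1..\<kappa>}"
    from \<open>k \<in> {1..\<kappa>} \<Longrightarrow> AE \<omega> in M. ?D k \<omega> = 0\<close>[OF this]
    show "AE \<omega> in M. ce_deviation (controls sig \<gamma>) k \<omega> = 0"
      by eventually_elim (use pd_mat_stage_gain_weight[of k] in \<open>auto simp: pd_mat_def qf_def\<close>)
  qed
qed

lemma ce_deviation_eq_0_iff:
  "ce_deviation U k \<omega> = 0 \<longleftrightarrow>
   U k \<omega> = - (stage_gain k *v (eta k \<omega> + input_response A B k (\<lambda>j. U j \<omega>)))"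
  unfolding ce_deviation_def by (rule add_eq_0_iff2)

lemma ce_controls_sq_integrable:
  assumes ce: "\<And>k \<omega>. 1 \<le> k \<Longrightarrow> k \<le> \<kappa> \<Longrightarrow> ce_deviation U k \<omega> = 0"
  shows "controls_sq_integrable U"
proof -
  have "1 \<le> k \<longrightarrow> k \<le> \<kappa> \<longrightarrow> vec_sq_integrable (U k)" for k
  proof (induction k rule: less_induct)
    case (less k)
    show ?case
    proof (intro impI)
      assume k: "1 \<le> k" "k \<le> \<kappa>"
      have "vec_sq_integrable (\<lambda>\<omega>. - (stage_gain k *v (eta k \<omega> + input_response A B k (\<lambda>j. U j \<omega>))))"
        using less k
        by (intro vec_sq_integrable_uminus vec_sq_integrable_matrix_vector_mult
              vec_sq_integrable_add vec_sq_integrable_eta vec_sq_integrable_input_response) auto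
      moreover have "U k = (\<lambda>\<omega>. - (stage_gain k *v (eta k \<omega> + input_response A B k (\<lambda>j. U j \<omega>))))"
        using ce k by (simp add: ce_deviation_eq_0_iff fun_eq_iff)
      ultimately show "vec_sq_integrable (U k)" by simp
    qed
  qed
  then show ?thesis by (simp add: controls_sq_integrable_def)
qed

lemma UC_ce:
  assumes U: "info_adapted (controls sig \<gamma>)"
    and ce: "\<And>k \<omega>. 1 \<le> k \<Longrightarrow> k \<le> \<kappa> \<Longrightarrow> ce_deviation (controls sig \<gamma>) k \<omega> = 0"
  shows "UC M A B C x1 w v \<kappa> sig Q R \<gamma> = ennreal optimal_cost"
  using UC_eq_optimal_cost_plus_deviation[OF U ce_controls_sq_integrable[OF ce]] ce
  by (simp add: qf_def)

lemma ce_controls_unique: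
  assumes "\<forall>k\<in>{1..\<kappa>}. ce_deviation U k \<omega> = 0" "\<forall>k\<in>{1..\<kappa>}. ce_deviation U' k \<omega> = 0"
  shows "\<forall>k\<in>{1..\<kappa>}. U k \<omega> = U' k \<omega>"
proof -
  have "1 \<le> k \<longrightarrow> k \<le> \<kappa> \<longrightarrow> U k \<omega> = U' k \<omega>" for k
  proof (induction k rule: less_induct)
    case (less k)
    show ?case
    proof (intro impI)
      assume k: "1 \<le> k" "k \<le> \<kappa>"
      then have "input_response A B k (\<lambda>j. U j \<omega>) = input_response A B k (\<lambda>j. U' j \<omega>)"
        using less by (intro input_response_cong) auto
      then show "U k \<omega> = U' k \<omega>" using assms k by (simp add: ce_deviation_eq_0_iff)
    qed
  qed
  then show ?thesis by auto
qed

end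

text \<open>A policy that computes \<open>u k\<close> from \<open>u 1, \<dots>, u (k - 1)\<close> and the signal history \<open>h\<close>
  by the rule \<open>f\<close>; \<open>unroll f k h\<close> recomputes \<open>u 1, \<dots>, u k\<close> from \<open>h\<close>.\<close>
fun unroll :: "(nat \<Rightarrow> (nat \<Rightarrow> 'v) \<Rightarrow> 'h \<Rightarrow> 'v) \<Rightarrow> nat \<Rightarrow> 'h \<Rightarrow> nat \<Rightarrow> 'v::zero" where
  "unroll f 0 h = (\<lambda>_. 0)"
| "unroll f (Suc k) h = (unroll f k h)(Suc k := f (Suc k) (unroll f k h) h)"

definition recursive_policy :: "(nat \<Rightarrow> (nat \<Rightarrow> 'v) \<Rightarrow> 'h \<Rightarrow> 'v) \<Rightarrow> nat \<Rightarrow> 'h \<Rightarrow> 'v::zero" where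
  "recursive_policy f = (\<lambda>k h. unroll f k h k)"

lemma unroll_upto: "m \<le> k \<Longrightarrow> unroll f k h m = unroll f m h m"
proof (induction k)
  case (Suc k)
  then show ?case by (cases "m = Suc k") simp_all
qed simp

lemma unroll_cong_history:
  assumes "\<And>k V h h'. (\<And>j. 1 \<le> j \<Longrightarrow> j \<le> k \<Longrightarrow> h j = h' j) \<Longrightarrow> f k V h = f k V h'"
    and "\<And>j. 1 \<le> j \<Longrightarrow> j \<le> k \<Longrightarrow> h j = h' j"
  shows "unroll f k h = unroll f k h'"
  using assms(2)
proof (induction k)
  case (Suc k)
  then have "unroll f k h = unroll f k h'" by simp
  moreover have "f (Suc k) (unroll f k h') h = f (Suc k) (unroll f k h') h'"
    using Suc.prems by (intro assms(1)) auto
  ultimately show ?case by simp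
qed simp

lemma borel_measurable_unroll:
  assumes "\<And>k V. (\<And>m. V m \<in> borel_measurable N) \<Longrightarrow> (\<lambda>h. f k (\<lambda>m. V m h) h) \<in> borel_measurable N"
  shows "(\<lambda>h. unroll f k h m) \<in> borel_measurable N"
proof (induction k arbitrary: m)
  case (Suc k)
  have "(\<lambda>h. f (Suc k) (\<lambda>m. unroll f k h m) h) \<in> borel_measurable N"
    by (rule assms) (rule Suc.IH)
  then show ?case using Suc.IH[of m] by (cases "m = Suc k") simp_all
qed simp

lemma recursive_policy_step:
  assumes past: "\<And>k V V' h. (\<And>m. 1 \<le> m \<Longrightarrow> m < k \<Longrightarrow> V m = V' m) \<Longrightarrow> f k V h = f k V' h"
    and causal: "\<And>k V h h'. (\<And>j. 1 \<le> j \<Longrightarrow> j \<le> k \<Longrightarrow> h j = h' j) \<Longrightarrow> f k V h = f k V h'"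
    and k: "1 \<le> k"
    and u: "\<And>m. 1 \<le> m \<Longrightarrow> m \<le> k \<Longrightarrow> u m = recursive_policy f m (H m)"
    and H: "\<And>m j. 1 \<le> j \<Longrightarrow> j \<le> m \<Longrightarrow> m \<le> k \<Longrightarrow> H m j = H k j"
  shows "u k = f k u (H k)"
proof -
  obtain k' where k': "k = Suc k'" using k by (cases k) auto
  have "unroll f k' (H k) m = u m" if "1 \<le> m" "m < k" for m
  proof -
    have "unroll f k' (H k) m = unroll f m (H k) m" using that k' by (intro unroll_upto) simp
    also have "unroll f m (H k) = unroll f m (H m)"
      using that H[where m=m] by (intro unroll_cong_history causal) auto
    finally show ?thesis using that u by (simp add: recursive_policy_def)
  qed
  then have "f k (unroll f k' (H k)) (H k) = f k u (H k)" by (intro past) auto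
  then show ?thesis using u[OF k order_refl] k' by (simp add: recursive_policy_def)
qed

lemma borel_measurable_component_component:
  "(\<lambda>h. h j i) \<in> borel_measurable (PiM UNIV (\<lambda>_. PiM UNIV (\<lambda>_. (borel :: 'b::topological_space measure))))"
  using measurable_compose[OF measurable_component_singleton[of j UNIV]
      measurable_component_singleton[of i UNIV]]
  by simp

lemma borel_measurable_component:
  "(\<lambda>h. h j) \<in> borel_measurable (PiM UNIV (\<lambda>_. (borel :: 'b::topological_space measure)))"
  by (rule measurable_component_singleton) simp

section \<open>Best responses are the certainty-equivalent controls\<close>

context lq_follower
begin

definition ce_implementable :: "'s measure \<Rightarrow> (nat \<Rightarrow> (nat \<Rightarrow> real^'n) \<Rightarrow> 'a \<Rightarrow> 's) \<Rightarrow> bool" where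
  "ce_implementable S sig \<longleftrightarrow>
     (\<forall>\<gamma>. admissible S \<kappa> \<gamma> \<longrightarrow> info_adapted (controls sig \<gamma>)) \<and>
     (\<exists>\<gamma>. admissible S \<kappa> \<gamma> \<and> (\<forall>k \<omega>. 1 \<le> k \<longrightarrow> k \<le> \<kappa> \<longrightarrow> ce_deviation (controls sig \<gamma>) k \<omega> = 0))"

lemma ce_implementable_best_response_exists:
  assumes "ce_implementable S sig"
  shows "\<exists>\<gamma>. best_response M A B C x1 w v \<kappa> S sig Q R \<gamma>"
proof -
  obtain \<gamma> where adm: "admissible S \<kappa> \<gamma>"
    and ce: "\<And>k \<omega>. 1 \<le> k \<Longrightarrow> k \<le> \<kappa> \<Longrightarrow> ce_deviation (controls sig \<gamma>) k \<omega> = 0"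
    using assms unfolding ce_implementable_def by blast
  have "UC M A B C x1 w v \<kappa> sig Q R \<gamma> \<le> UC M A B C x1 w v \<kappa> sig Q R \<gamma>'"
    if "admissible S \<kappa> \<gamma>'" for \<gamma>'
    using assms adm that unfolding ce_implementable_def
    by (simp add: UC_ce[OF _ ce] optimal_cost_le_UC)
  with adm show ?thesis unfolding best_response_def by blast
qed

lemma ce_implementable_best_response_ce:
  assumes "ce_implementable S sig" and best: "best_response M A B C x1 w v \<kappa> S sig Q R \<gamma>"
  shows "AE \<omega> in M. \<forall>k\<in>{1..\<kappa>}. ce_deviation (controls sig \<gamma>) k \<omega> = 0"
proof -
  obtain \<gamma>0 where adm: "admissible S \<kappa> \<gamma>0"
    and ce: "\<And>k \<omega>. 1 \<le> k \<Longrightarrow> k \<le> \<kappa> \<Longrightarrow> ce_deviation (controls sig \<gamma>0) k \<omega> = 0"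
    using assms(1) unfolding ce_implementable_def by blast
  have adapted: "info_adapted (controls sig \<gamma>')" if "admissible S \<kappa> \<gamma>'" for \<gamma>'
    using assms(1) that unfolding ce_implementable_def by blast
  have "UC M A B C x1 w v \<kappa> sig Q R \<gamma> \<le> UC M A B C x1 w v \<kappa> sig Q R \<gamma>0"
    using best adm unfolding best_response_def by blast
  also have "\<dots> = ennreal optimal_cost" by (rule UC_ce[OF adapted[OF adm] ce])
  finally show ?thesis
    using best by (intro UC_le_optimal_cost_imp_ce adapted) (simp_all add: best_response_def)
qed

lemma info_adapted_policy:
  fixes H :: "nat \<Rightarrow> (nat \<Rightarrow> real^'r) \<Rightarrow> 'a \<Rightarrow> nat \<Rightarrow> 's"
  assumes adm: "admissible S \<kappa> \<gamma>"
    and u: "\<And>k \<omega>. 1 \<le> k \<Longrightarrow> u k \<omega> = \<gamma> k (H k (\<lambda>m. u m \<omega>) \<omega>)"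
    and H: "\<And>j k V. 1 \<le> j \<Longrightarrow> j \<le> k \<Longrightarrow>
              (\<And>m. 1 \<le> m \<Longrightarrow> m < j \<Longrightarrow> V m \<in> borel_measurable (info k)) \<Longrightarrow>
              (\<lambda>\<omega>. H j (\<lambda>m. V m \<omega>) \<omega>) \<in> measurable (info k) (PiM UNIV (\<lambda>_. S))"
  shows "info_adapted u"
  unfolding info_adapted_def
proof (intro allI impI)
  fix j0 k assume j0: "1 \<le> j0" "j0 \<le> k" and k: "k \<le> \<kappa>"
  have "1 \<le> j \<longrightarrow> j \<le> k \<longrightarrow> u j \<in> borel_measurable (info k)" for j
  proof (induction j rule: less_induct)
    case (less j)
    show ?case
    proof (intro impI)
      assume j: "1 \<le> j" "j \<le> k"
      have "\<gamma> j \<in> borel_measurable (PiM UNIV (\<lambda>_. S))"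
        using adm j k by (simp add: admissible_def)
      moreover have "(\<lambda>\<omega>. H j (\<lambda>m. u m \<omega>) \<omega>) \<in> measurable (info k) (PiM UNIV (\<lambda>_. S))"
        using less.IH j by (intro H) auto
      ultimately have "(\<lambda>\<omega>. \<gamma> j (H j (\<lambda>m. u m \<omega>) \<omega>)) \<in> borel_measurable (info k)"
        by (rule measurable_compose[rotated])
      moreover have "u j = (\<lambda>\<omega>. \<gamma> j (H j (\<lambda>m. u m \<omega>) \<omega>))" by (rule ext) (rule u[OF j(1)])
      ultimately show "u j \<in> borel_measurable (info k)" by simp
    qed
  qed
  then show "u j0 \<in> borel_measurable (info k)" using j0 by simp
qed

text \<open>What the follower receives under each rule, written in terms of the control-free signals
  and its own past inputs.\<close>
definition sigLN_history :: "nat \<Rightarrow> (nat \<Rightarrow> real^'r) \<Rightarrow> 'a \<Rightarrow> nat \<Rightarrow> nat \<Rightarrow> real^'n" where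
  "sigLN_history k u \<omega> =
     (\<lambda>j. if 1 \<le> j \<and> j \<le> k then (\<lambda>i. sf j \<omega> i + sigLN_input Lt A B C j u i) else undefined)"

definition sigK_history :: "nat \<Rightarrow> (nat \<Rightarrow> real^'r) \<Rightarrow> 'a \<Rightarrow> nat \<Rightarrow> real^'m" where
  "sigK_history k u \<omega> =
     (\<lambda>j. if 1 \<le> j \<and> j \<le> k then eta j \<omega> + sigK_input Kc Lt A B C j u else undefined)"

lemma control_sigLN:
  "controls (sigLN Lt \<theta>) \<gamma> k \<omega> = \<gamma> k (sigLN_history k (\<lambda>m. controls (sigLN Lt \<theta>) \<gamma> m \<omega>) \<omega>)"
  unfolding control_eq_policy[of _ _ _ _ _ _ _ \<gamma> k] sigLN_history_def
  by (intro arg_cong[where f="\<gamma> k"] ext)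
     (simp add: sigLN_superposition state_superposition)

lemma control_sigK:
  "controls (sigK Kc Lt \<theta>) \<gamma> k \<omega> = \<gamma> k (sigK_history k (\<lambda>m. controls (sigK Kc Lt \<theta>) \<gamma> m \<omega>) \<omega>)"
  unfolding control_eq_policy[of _ _ _ _ _ _ _ \<gamma> k] sigK_history_def
  by (intro arg_cong[where f="\<gamma> k"] ext)
     (simp add: sigK_superposition state_superposition)

lemma measurable_sigLN_history:
  assumes "1 \<le> j" "j \<le> k" "\<And>m. 1 \<le> m \<Longrightarrow> m < j \<Longrightarrow> V m \<in> borel_measurable (info k)"
  shows "(\<lambda>\<omega>. sigLN_history j (\<lambda>m. V m \<omega>) \<omega>)
           \<in> measurable (info k) (PiM UNIV (\<lambda>_. PiM UNIV (\<lambda>_. borel)))"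
proof (rule measurable_PiM_single')
  fix j'
  show "(\<lambda>\<omega>. sigLN_history j (\<lambda>m. V m \<omega>) \<omega> j') \<in> measurable (info k) (PiM UNIV (\<lambda>_. borel))"
  proof (cases "1 \<le> j' \<and> j' \<le> j")
    case True
    have "(\<lambda>\<omega> i. sf j' \<omega> i + sigLN_input Lt A B C j' (\<lambda>m. V m \<omega>) i)
            \<in> measurable (info k) (PiM UNIV (\<lambda>_. borel))"
      using True assms
      by (intro measurable_PiM_single' borel_measurable_add borel_measurable_info_sfree
            borel_measurable_sigLN_input) (auto simp: space_PiM)
    then show ?thesis using True by (simp add: sigLN_history_def)
  next
    case False
    then have "\<And>\<omega>. sigLN_history j (\<lambda>m. V m \<omega>) \<omega> j' = undefined" by (auto simp: sigLN_history_def)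
    then show ?thesis by (simp add: space_PiM)
  qed
qed (simp add: space_PiM)

lemma measurable_sigK_history:
  assumes "1 \<le> j" "j \<le> k" "\<And>m. 1 \<le> m \<Longrightarrow> m < j \<Longrightarrow> V m \<in> borel_measurable (info k)"
  shows "(\<lambda>\<omega>. sigK_history j (\<lambda>m. V m \<omega>) \<omega>) \<in> measurable (info k) (PiM UNIV (\<lambda>_. borel))"
proof (rule measurable_PiM_single')
  fix j'
  show "(\<lambda>\<omega>. sigK_history j (\<lambda>m. V m \<omega>) \<omega> j') \<in> borel_measurable (info k)"
    using assms unfolding sigK_history_def
    by (cases "1 \<le> j' \<and> j' \<le> j")
       (auto intro!: borel_measurable_add borel_measurable_info_eta borel_measurable_sigK_input)
qed (simp add: space_PiM)

text \<open>The certainty-equivalent policies: the follower subtracts the known effect of its own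
  past inputs from the signals, which leaves \<open>eta k\<close>.\<close>
definition ce_step_sigLN :: "nat \<Rightarrow> (nat \<Rightarrow> real^'r) \<Rightarrow> (nat \<Rightarrow> nat \<Rightarrow> real^'n) \<Rightarrow> real^'r" where
  "ce_step_sigLN k V h = - (stage_gain k *v
     ((\<Sum>j\<in>{1..k}. \<Sum>i\<in>{1..j}. Kc k j i *v (h j i - sigLN_input Lt A B C j V i))
      + input_response A B k V))"

definition ce_step_sigK :: "nat \<Rightarrow> (nat \<Rightarrow> real^'r) \<Rightarrow> (nat \<Rightarrow> real^'m) \<Rightarrow> real^'r" where
  "ce_step_sigK k V h = (if k = 0 then 0
     else - (stage_gain k *v (h k - sigK_input Kc Lt A B C k V + input_response A B k V)))"

lemma info_adapted_sigLN:
  assumes "admissible (PiM UNIV (\<lambda>_. borel)) \<kappa> \<gamma>"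
  shows "info_adapted (controls (sigLN Lt \<theta>) \<gamma>)"
  using assms
proof (rule info_adapted_policy[where H = sigLN_history])
  show "controls (sigLN Lt \<theta>) \<gamma> k \<omega> = \<gamma> k (sigLN_history k (\<lambda>m. controls (sigLN Lt \<theta>) \<gamma> m \<omega>) \<omega>)"
    for k \<omega> by (rule control_sigLN)
qed (rule measurable_sigLN_history)

lemma info_adapted_sigK:
  assumes "admissible borel \<kappa> \<gamma>"
  shows "info_adapted (controls (sigK Kc Lt \<theta>) \<gamma>)"
  using assms
proof (rule info_adapted_policy[where H = sigK_history])
  show "controls (sigK Kc Lt \<theta>) \<gamma> k \<omega> = \<gamma> k (sigK_history k (\<lambda>m. controls (sigK Kc Lt \<theta>) \<gamma> m \<omega>) \<omega>)"
    for k \<omega> by (rule control_sigK)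
qed (rule measurable_sigK_history)

lemma admissible_ce_policy_sigLN:
  "admissible (PiM UNIV (\<lambda>_. borel)) \<kappa> (recursive_policy ce_step_sigLN)"
  unfolding admissible_def recursive_policy_def
proof (intro ballI borel_measurable_unroll)
  fix k and V :: "nat \<Rightarrow> (nat \<Rightarrow> nat \<Rightarrow> real^'n) \<Rightarrow> real^'r"
  assume "\<And>m. V m \<in> borel_measurable (PiM UNIV (\<lambda>_. PiM UNIV (\<lambda>_. borel)))"
  then show "(\<lambda>h. ce_step_sigLN k (\<lambda>m. V m h) h) \<in> borel_measurable (PiM UNIV (\<lambda>_. PiM UNIV (\<lambda>_. borel)))"
    unfolding ce_step_sigLN_def
    by (intro borel_measurable_uminus borel_measurable_matrix_vector_mult borel_measurable_add
          borel_measurable_sum borel_measurable_diff borel_measurable_component_component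
          borel_measurable_sigLN_input borel_measurable_input_response)
qed

lemma admissible_ce_policy_sigK: "admissible borel \<kappa> (recursive_policy ce_step_sigK)"
  unfolding admissible_def recursive_policy_def
proof (intro ballI borel_measurable_unroll)
  fix k and V :: "nat \<Rightarrow> (nat \<Rightarrow> real^'m) \<Rightarrow> real^'r"
  assume "\<And>m. V m \<in> borel_measurable (PiM UNIV (\<lambda>_. borel))"
  then show "(\<lambda>h. ce_step_sigK k (\<lambda>m. V m h) h) \<in> borel_measurable (PiM UNIV (\<lambda>_. borel))"
    unfolding ce_step_sigK_def
    by (cases "k = 0")
       (simp_all add: borel_measurable_uminus borel_measurable_matrix_vector_mult
          borel_measurable_add borel_measurable_diff borel_measurable_component
          borel_measurable_sigK_input borel_measurable_input_response)
qed

lemma ce_step_sigLN_cong_inputs: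
  assumes "\<And>m. 1 \<le> m \<Longrightarrow> m < k \<Longrightarrow> V m = V' m"
  shows "ce_step_sigLN k V h = ce_step_sigLN k V' h"
proof -
  have "sigLN_input Lt A B C j V = sigLN_input Lt A B C j V'" if "j \<in> {1..k}" for j
    using that assms by (intro sigLN_input_cong) auto
  moreover have "input_response A B k V = input_response A B k V'"
    using assms by (rule input_response_cong)
  ultimately show ?thesis
    unfolding ce_step_sigLN_def
    by (intro arg_cong2[where f = "\<lambda>a b. - (stage_gain k *v (a + b))"] sum.cong refl) auto
qed

lemma ce_step_sigLN_cong_history:
  "(\<And>j. 1 \<le> j \<Longrightarrow> j \<le> k \<Longrightarrow> h j = h' j) \<Longrightarrow> ce_step_sigLN k V h = ce_step_sigLN k V h'"
  unfolding ce_step_sigLN_def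
  by (intro arg_cong2[where f = "\<lambda>a b. - (stage_gain k *v (a + b))"] sum.cong refl) auto

lemma ce_step_sigK_cong_inputs:
  "(\<And>m. 1 \<le> m \<Longrightarrow> m < k \<Longrightarrow> V m = V' m) \<Longrightarrow> ce_step_sigK k V h = ce_step_sigK k V' h"
  using sigK_input_cong[of k V V' Kc Lt A B C] input_response_cong[of k V V' A B]
  by (simp add: ce_step_sigK_def)

lemma ce_step_sigK_cong_history:
  "(\<And>j. 1 \<le> j \<Longrightarrow> j \<le> k \<Longrightarrow> h j = h' j) \<Longrightarrow> ce_step_sigK k V h = ce_step_sigK k V h'"
  by (simp add: ce_step_sigK_def)

lemma ce_deviation_ce_policy_sigLN:
  assumes "1 \<le> k"
  shows "ce_deviation (controls (sigLN Lt \<theta>) (recursive_policy ce_step_sigLN)) k \<omega> = 0"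
proof -
  let ?u = "\<lambda>m. controls (sigLN Lt \<theta>) (recursive_policy ce_step_sigLN) m \<omega>"
  have step: "?u k = ce_step_sigLN k ?u (sigLN_history k ?u \<omega>)"
  proof (rule recursive_policy_step[where f = ce_step_sigLN and u = ?u and k = k
        and H = "\<lambda>k. sigLN_history k ?u \<omega>"])
    show "?u m = recursive_policy ce_step_sigLN m (sigLN_history m ?u \<omega>)" for m
      by (rule control_sigLN)
    show "sigLN_history m ?u \<omega> j = sigLN_history k ?u \<omega> j" if "1 \<le> j" "j \<le> m" "m \<le> k" for m j
      using that by (simp add: sigLN_history_def)
  qed (use assms ce_step_sigLN_cong_inputs ce_step_sigLN_cong_history in blast)+
  have "(\<Sum>j\<in>{1..k}. \<Sum>i\<in>{1..j}. Kc k j i *v (sigLN_history k ?u \<omega> j i - sigLN_input Lt A B C j ?u i))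
        = eta k \<omega>"
    unfolding sigK_free_def sigLN_history_def by (intro sum.cong refl) auto
  with step show ?thesis by (simp add: ce_deviation_eq_0_iff ce_step_sigLN_def)
qed

lemma ce_deviation_ce_policy_sigK:
  assumes "1 \<le> k"
  shows "ce_deviation (controls (sigK Kc Lt \<theta>) (recursive_policy ce_step_sigK)) k \<omega> = 0"
proof -
  let ?u = "\<lambda>m. controls (sigK Kc Lt \<theta>) (recursive_policy ce_step_sigK) m \<omega>"
  have "?u k = ce_step_sigK k ?u (sigK_history k ?u \<omega>)"
  proof (rule recursive_policy_step[where f = ce_step_sigK and u = ?u and k = k
        and H = "\<lambda>k. sigK_history k ?u \<omega>"])
    show "?u m = recursive_policy ce_step_sigK m (sigK_history m ?u \<omega>)" for m
      by (rule control_sigK)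
    show "sigK_history m ?u \<omega> j = sigK_history k ?u \<omega> j" if "1 \<le> j" "j \<le> m" "m \<le> k" for m j
      using that by (simp add: sigK_history_def)
  qed (use assms ce_step_sigK_cong_inputs ce_step_sigK_cong_history in blast)+
  then show ?thesis
    using assms by (simp add: ce_deviation_eq_0_iff ce_step_sigK_def sigK_history_def)
qed

lemma ce_implementable_sigLN: "ce_implementable (PiM UNIV (\<lambda>_. borel)) (sigLN Lt \<theta>)"
  unfolding ce_implementable_def
  using info_adapted_sigLN admissible_ce_policy_sigLN ce_deviation_ce_policy_sigLN by blast

lemma ce_implementable_sigK: "ce_implementable borel (sigK Kc Lt \<theta>)"
  unfolding ce_implementable_def
  using info_adapted_sigK admissible_ce_policy_sigK ce_deviation_ce_policy_sigK by blast

lemma best_responses_agree: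
  assumes "best_response M A B C x1 w v \<kappa> borel (sigK Kc Lt \<theta>) Q R \<gamma>"
    and "best_response M A B C x1 w v \<kappa> (PiM UNIV (\<lambda>_. borel)) (sigLN Lt \<theta>) Q R \<gamma>'"
  shows "AE \<omega> in M. \<forall>k\<in>{1..\<kappa>}. controls (sigK Kc Lt \<theta>) \<gamma> k \<omega> = controls (sigLN Lt \<theta>) \<gamma>' k \<omega>"
  using ce_implementable_best_response_ce[OF ce_implementable_sigK assms(1)]
    ce_implementable_best_response_ce[OF ce_implementable_sigLN assms(2)]
  by eventually_elim (rule ce_controls_unique)

end

lemma state_cost_cong_AE:
  assumes "AE \<omega> in M. \<forall>k\<in>{1..\<kappa>}. control A B C x1 w v sig \<gamma> k \<omega> = control A B C x1 w v sig' \<gamma>' k \<omega>"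
  shows "state_cost M A B C x1 w v \<kappa> sig Q \<gamma> = state_cost M A B C x1 w v \<kappa> sig' Q \<gamma>'"
  unfolding state_cost_def
proof (intro sum.cong refl nn_integral_cong_AE)
  fix k assume "k \<in> {1..\<kappa>}"
  from assms show "AE \<omega> in M. ennreal (qf Q (state A B C x1 w v sig \<gamma> (k + 1) \<omega>)) =
      ennreal (qf Q (state A B C x1 w v sig' \<gamma>' (k + 1) \<omega>))"
  proof eventually_elim
    case (elim \<omega>)
    then have "input_response A B (k + 1) (\<lambda>j. control A B C x1 w v sig \<gamma> j \<omega>) =
               input_response A B (k + 1) (\<lambda>j. control A B C x1 w v sig' \<gamma>' j \<omega>)"
      using \<open>k \<in> {1..\<kappa>}\<close> by (intro input_response_cong) auto
    then show ?case by (simp add: state_superposition)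
  qed
qed

lemma control_cost_cong_AE:
  assumes "AE \<omega> in M. \<forall>k\<in>{1..\<kappa>}. control A B C x1 w v sig \<gamma> k \<omega> = control A B C x1 w v sig' \<gamma>' k \<omega>"
  shows "control_cost M A B C x1 w v \<kappa> sig R \<gamma> = control_cost M A B C x1 w v \<kappa> sig' R \<gamma>'"
  unfolding control_cost_def
  by (intro sum.cong refl nn_integral_cong_AE) (use assms in \<open>auto elim!: AE_mp\<close>)

lemma UC_cong_AE:
  assumes "AE \<omega> in M. \<forall>k\<in>{1..\<kappa>}. control A B C x1 w v sig \<gamma> k \<omega> = control A B C x1 w v sig' \<gamma>' k \<omega>"
  shows "UC M A B C x1 w v \<kappa> sig Q R \<gamma> = UC M A B C x1 w v \<kappa> sig' Q R \<gamma>'"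
  unfolding UC_def using state_cost_cong_AE[OF assms] control_cost_cong_AE[OF assms] by simp

lemma US_cong_AE:
  assumes "\<And>t. t \<in> insert wo Om \<Longrightarrow> AE \<omega> in M. \<forall>k\<in>{1..\<kappa>}.
             control A B C x1 w v sig (Gam t) k \<omega> = control A B C x1 w v sig' (Gam' t) k \<omega>"
  shows "US M A B C x1 w v \<kappa> sig Om wo Q R Gam = US M A B C x1 w v \<kappa> sig' Om wo Q R Gam'"
  unfolding US_def
  by (intro SUP_cong refl arg_cong2[where f = "(+)"] sum.cong arg_cong[where f = "\<lambda>z. _ * z"]
        state_cost_cong_AE UC_cong_AE assms) auto

theorem lemma2:
  fixes M :: "'a measure"
    and A :: "real^'m^'m" and B :: "real^'r^'m" and C :: "real^'m^'n"
    and x1 :: "'a \<Rightarrow> real^'m" and w :: "nat \<Rightarrow> 'a \<Rightarrow> real^'m" and v :: "nat \<Rightarrow> 'a \<Rightarrow> real^'n"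
    and \<Sigma>1 \<Sigma>w :: "real^'m^'m" and \<Sigma>v :: "real^'n^'n"
    and \<kappa> :: nat
    and Om :: "'t set" and wo :: 't
    and Q :: "'t \<Rightarrow> real^'m^'m" and R :: "'t \<Rightarrow> real^'r^'r"
    and Lt :: "nat \<Rightarrow> nat \<Rightarrow> nat \<Rightarrow> real^'n^'n"
    and \<theta> :: "nat \<Rightarrow> 'a \<Rightarrow> nat \<Rightarrow> real^'n"
    and Kc :: "nat \<Rightarrow> nat \<Rightarrow> nat \<Rightarrow> real^'n^'m"
  assumes "prob_space M"
    and "centered_gaussian_vec M x1" "has_cov M x1 \<Sigma>1"
    and "\<And>k. centered_gaussian_vec M (w k)" "\<And>k. has_cov M (w k) \<Sigma>w"
    and "\<And>k. centered_gaussian_vec M (v k)" "\<And>k. has_cov M (v k) \<Sigma>v"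
    and "\<And>k. centered_gaussian_block M k (\<theta> k)"
    and "prob_space.indep_sets M (prim_sets M x1 w v \<theta>) UNIV"
    and "finite Om" "wo \<notin> Om"
    and "\<And>t. t \<in> insert wo Om \<Longrightarrow> psd_mat (Q t)"
    and "\<And>t. t \<in> insert wo Om \<Longrightarrow> pd_mat (R t)"
    and condexp: "\<And>k. k \<in> {1..\<kappa>} \<Longrightarrow> AE \<omega> in M. \<forall>c.
        (\<Sum>j\<in>{1..k}. \<Sum>i\<in>{1..j}. Kc k j i *v sfree A C x1 w v Lt \<theta> j \<omega> i) $ c
          = real_cond_exp M (sig_gen M A C x1 w v Lt \<theta> k) (\<lambda>\<omega>'. xfree A x1 w k \<omega>' $ c) \<omega>"
  shows "(\<forall>t\<in>insert wo Om.
            ((\<exists>\<gamma>. best_response M A B C x1 w v \<kappa> borel (sigK Kc Lt \<theta>) (Q t) (R t) \<gamma>)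
              \<longleftrightarrow> (\<exists>\<gamma>. best_response M A B C x1 w v \<kappa> (PiM UNIV (\<lambda>_. borel)) (sigLN Lt \<theta>) (Q t) (R t) \<gamma>))
          \<and> (\<forall>\<gamma> \<gamma>'. best_response M A B C x1 w v \<kappa> borel (sigK Kc Lt \<theta>) (Q t) (R t) \<gamma>
                 \<longrightarrow> best_response M A B C x1 w v \<kappa> (PiM UNIV (\<lambda>_. borel)) (sigLN Lt \<theta>) (Q t) (R t) \<gamma>'
                 \<longrightarrow> (\<forall>k\<in>{1..\<kappa>}. AE \<omega> in M.
                        control A B C x1 w v (sigK Kc Lt \<theta>) \<gamma> k \<omega>
                        = control A B C x1 w v (sigLN Lt \<theta>) \<gamma>' k \<omega>)))
        \<and> (\<forall>Gam Gam'.
            (\<forall>t\<in>insert wo Om. best_response M A B C x1 w v \<kappa> borel (sigK Kc Lt \<theta>) (Q t) (R t) (Gam t))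
            \<longrightarrow> (\<forall>t\<in>insert wo Om. best_response M A B C x1 w v \<kappa> (PiM UNIV (\<lambda>_. borel)) (sigLN Lt \<theta>) (Q t) (R t) (Gam' t))
            \<longrightarrow> US M A B C x1 w v \<kappa> (sigK Kc Lt \<theta>) Om wo Q R Gam
                = US M A B C x1 w v \<kappa> (sigLN Lt \<theta>) Om wo Q R Gam')"
proof -
  have "signaling_setting M A C x1 w v Lt \<theta> Kc \<kappa>"
    using assms by (simp add: signaling_setting_def signaling_setting_axioms_def)
  then have follower: "lq_follower M A C x1 w v Lt \<theta> Kc \<kappa> (Q t) (R t)" if "t \<in> insert wo Om" for t
    using assms(12,13)[OF that] by (intro lq_follower.intro riccati.intro)
  note implementable = lq_follower.ce_implementable_sigK[OF follower]
    lq_follower.ce_implementable_sigLN[OF follower]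
  note agree = lq_follower.best_responses_agree[OF follower]
  show ?thesis
  proof (intro conjI ballI allI impI)
    fix t assume t: "t \<in> insert wo Om"
    show "(\<exists>\<gamma>. best_response M A B C x1 w v \<kappa> borel (sigK Kc Lt \<theta>) (Q t) (R t) \<gamma>) \<longleftrightarrow>
          (\<exists>\<gamma>. best_response M A B C x1 w v \<kappa> (PiM UNIV (\<lambda>_. borel)) (sigLN Lt \<theta>) (Q t) (R t) \<gamma>)"
      using lq_follower.ce_implementable_best_response_exists[OF follower[OF t] implementable(1)[OF t]]
        lq_follower.ce_implementable_best_response_exists[OF follower[OF t] implementable(2)[OF t]]
      by blast
    fix \<gamma> \<gamma>' k
    assume "best_response M A B C x1 w v \<kappa> borel (sigK Kc Lt \<theta>) (Q t) (R t) \<gamma>"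
      and "best_response M A B C x1 w v \<kappa> (PiM UNIV (\<lambda>_. borel)) (sigLN Lt \<theta>) (Q t) (R t) \<gamma>'"
      and k: "k \<in> {1..\<kappa>}"
    from agree[OF t this(1,2)]
    show "AE \<omega> in M. control A B C x1 w v (sigK Kc Lt \<theta>) \<gamma> k \<omega> = control A B C x1 w v (sigLN Lt \<theta>) \<gamma>' k \<omega>"
      by eventually_elim (use k in blast)
  qed (intro US_cong_AE, use agree in blast)
qed

end
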